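(* Let $n\ge 2$ and let $\rho$ be an $n$-qubit entangled symmetric state. Define $M(\rho)=\min\{|\mathcal S|:\mathcal S\subseteq\mathcal S_{L(\rho)},\ \mathcal S\text{ determines }\rho\}$ and $m(\rho)=\min\{|\mathcal S|:\mathcal S\subseteq\mathcal S_{l(\rho)},\ \mathcal S\text{ detects }\rho\text{'s GME}\}$. Then $L(\rho)\ge 2$, $l(\rho)\ge2$, and $$M(\rho)=\left\lceil\frac{n-1}{L(\rho)-1}\right\rceil,\qquad m(\rho)=\left\lceil\frac{n-1}{l(\rho)-1}\right\rceil.$$
   Context: Let $[n]=\{1,\dots,n\}$, $\mathcal H_{[n]}=(\mathbb C^2)^{\otimes n}$; for $S\subseteq[n]$, $\rho_S$ is the partial trace over the qubits outside $S$. $\mathcal S_k$ denotes the collection of all $k$-element subsets of $[n]$. A pure state is biseparable if it is a product $|\alpha\rangle_S\otimes|\beta\rangle_{\bar S}$ for some $\emptyset\ne S\subsetneq[n]$, and fully separable if separable with respect to every bipartition; mixed states are biseparable (fully separable) if convex combinations of such pure states; entangled = not fully separable; genuinely entangled = not biseparable. $\mathcal C(\rho,\mathcal S)=\{\sigma\text{ density matrix}:\sigma_S=\rho_S\ \forall S\in\mathcal S\}$; $\mathcal S$ determines $\rho$ if $\mathcal C(\rho,\mathcal S)=\{\rho\}$, and detects $\rho$'s GME if all elements of $\mathcal C(\rho,\mathcal S)$ are genuinely entangled. $L(\rho)=\min_{\mathcal S\text{ determines }\rho}\max_{S\in\mathcal S}|S|$, $l(\rho)=\min_{\mathcal S\text{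 detects }\rho\text{'s GME}}\max_{S\in\mathcal S}|S|$. A state is symmetric if its range lies in the subspace of vectors invariant under swapping any two qubits. *)

theory Defs
  imports Complex_Main
begin

text \<open>A computational basis vector of
(C^2)^{\<otimes>n} is labelled by the subset x of {1..n} of qubits in state |1>.
Vectors are functions nat set => complex, operators are functions
nat set => nat set => complex (matrix entries), both vanishing outside Pow {1..n}.\<close>

definition qubits :: "nat \<Rightarrow> nat set" where
  "qubits n = {1..n}"

definition is_vec :: "nat set \<Rightarrow> (nat set \<Rightarrow> complex) \<Rightarrow> bool" where
  "is_vec A v \<longleftrightarrow> (\<forall>x. \<not> x \<subseteq> A \<longrightarrow> v x = 0)"

definition is_op :: "nat set \<Rightarrow> (nat set \<Rightarrow> nat set \<Rightarrow> complex) \<Rightarrow> bool" where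
  "is_op A r \<longleftrightarrow> (\<forall>x y. \<not> (x \<subseteq> A \<and> y \<subseteq> A) \<longrightarrow> r x y = 0)"

definition density :: "nat \<Rightarrow> (nat set \<Rightarrow> nat set \<Rightarrow> complex) \<Rightarrow> bool" where
  "density n r \<longleftrightarrow> is_op (qubits n) r
     \<and> (\<forall>x y. r y x = cnj (r x y))
     \<and> (\<forall>v. let q = (\<Sum>x\<in>Pow (qubits n). \<Sum>y\<in>Pow (qubits n). cnj (v x) * r x y * v y)
            in Im q = 0 \<and> Re q \<ge> 0)
     \<and> (\<Sum>x\<in>Pow (qubits n). r x x) = 1"

definition ptrace :: "nat \<Rightarrow> (nat set \<Rightarrow> nat set \<Rightarrow> complex) \<Rightarrow> nat set \<Rightarrow> nat set \<Rightarrow> nat set \<Rightarrow> complex" where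
  "ptrace n r S x y = (if x \<subseteq> S \<and> y \<subseteq> S
       then (\<Sum>z\<in>Pow (qubits n - S). r (x \<union> z) (y \<union> z)) else 0)"

definition unit_vec :: "nat set \<Rightarrow> (nat set \<Rightarrow> complex) \<Rightarrow> bool" where
  "unit_vec A v \<longleftrightarrow> is_vec A v \<and> (\<Sum>x\<in>Pow A. (cmod (v x))\<^sup>2) = 1"

definition proj :: "(nat set \<Rightarrow> complex) \<Rightarrow> nat set \<Rightarrow> nat set \<Rightarrow> complex" where
  "proj v x y = v x * cnj (v y)"

definition product_wrt :: "nat \<Rightarrow> nat set \<Rightarrow> (nat set \<Rightarrow> complex) \<Rightarrow> bool" where
  "product_wrt n S psi \<longleftrightarrow> (\<exists>\<alpha> \<beta>. unit_vec S \<alpha> \<and> unit_vec (qubits n - S) \<beta> \<and>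
       (\<forall>x\<subseteq>qubits n. psi x = \<alpha> (x \<inter> S) * \<beta> (x - S)))"

definition proper_bipart :: "nat \<Rightarrow> nat set \<Rightarrow> bool" where
  "proper_bipart n S \<longleftrightarrow> S \<noteq> {} \<and> S \<subset> qubits n"

definition pure_bisep :: "nat \<Rightarrow> (nat set \<Rightarrow> complex) \<Rightarrow> bool" where
  "pure_bisep n psi \<longleftrightarrow> unit_vec (qubits n) psi \<and> (\<exists>S. proper_bipart n S \<and> product_wrt n S psi)"

definition pure_fullsep :: "nat \<Rightarrow> (nat set \<Rightarrow> complex) \<Rightarrow> bool" where
  "pure_fullsep n psi \<longleftrightarrow> unit_vec (qubits n) psi \<and> (\<forall>S. proper_bipart n S \<longrightarrow> product_wrt n S psi)"

definition convex_pure :: "((nat set \<Rightarrow> complex) \<Rightarrow> bool) \<Rightarrow> (nat set \<Rightarrow> nat set \<Rightarrow> complex) \<Rightarrow> bool" where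
  "convex_pure P r \<longleftrightarrow> (\<exists>k (p :: nat \<Rightarrow> real) psi.
      (\<forall>i<k. p i \<ge> 0 \<and> P (psi i)) \<and> (\<Sum>i<k. p i) = 1 \<and>
      r = (\<lambda>x y. \<Sum>i<k. complex_of_real (p i) * proj (psi i) x y))"

definition biseparable :: "nat \<Rightarrow> (nat set \<Rightarrow> nat set \<Rightarrow> complex) \<Rightarrow> bool" where
  "biseparable n r \<longleftrightarrow> convex_pure (pure_bisep n) r"

definition fully_separable :: "nat \<Rightarrow> (nat set \<Rightarrow> nat set \<Rightarrow> complex) \<Rightarrow> bool" where
  "fully_separable n r \<longleftrightarrow> convex_pure (pure_fullsep n) r"

definition entangled :: "nat \<Rightarrow> (nat set \<Rightarrow> nat set \<Rightarrow> complex) \<Rightarrow> bool" where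
  "entangled n r \<longleftrightarrow> \<not> fully_separable n r"

definition genuinely_entangled :: "nat \<Rightarrow> (nat set \<Rightarrow> nat set \<Rightarrow> complex) \<Rightarrow> bool" where
  "genuinely_entangled n r \<longleftrightarrow> \<not> biseparable n r"

definition swap_lbl :: "nat \<Rightarrow> nat \<Rightarrow> nat set \<Rightarrow> nat set" where
  "swap_lbl i j x = (\<lambda>k. if k = i then j else if k = j then i else k) ` x"

definition sym_vec :: "nat \<Rightarrow> (nat set \<Rightarrow> complex) \<Rightarrow> bool" where
  "sym_vec n v \<longleftrightarrow> (\<forall>i\<in>qubits n. \<forall>j\<in>qubits n. \<forall>x. v (swap_lbl i j x) = v x)"

definition apply_op :: "nat \<Rightarrow> (nat set \<Rightarrow> nat set \<Rightarrow> complex) \<Rightarrow> (nat set \<Rightarrow> complex) \<Rightarrow> nat set \<Rightarrow> complex" where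
  "apply_op n r v x = (\<Sum>y\<in>Pow (qubits n). r x y * v y)"

definition symmetric_state :: "nat \<Rightarrow> (nat set \<Rightarrow> nat set \<Rightarrow> complex) \<Rightarrow> bool" where
  "symmetric_state n r \<longleftrightarrow> (\<forall>v. is_vec (qubits n) v \<longrightarrow> sym_vec n (apply_op n r v))"

definition compat :: "nat \<Rightarrow> (nat set \<Rightarrow> nat set \<Rightarrow> complex) \<Rightarrow> nat set set \<Rightarrow> (nat set \<Rightarrow> nat set \<Rightarrow> complex) set" where
  "compat n r SS = {s. density n s \<and> (\<forall>S\<in>SS. ptrace n s S = ptrace n r S)}"

definition determines :: "nat \<Rightarrow> nat set set \<Rightarrow> (nat set \<Rightarrow> nat set \<Rightarrow> complex) \<Rightarrow> bool" where
  "determines n SS r \<longleftrightarrow> SS \<subseteq> Pow (qubits n) \<and> compat n r SS = {r}"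

definition detects_GME :: "nat \<Rightarrow> nat set set \<Rightarrow> (nat set \<Rightarrow> nat set \<Rightarrow> complex) \<Rightarrow> bool" where
  "detects_GME n SS r \<longleftrightarrow> SS \<subseteq> Pow (qubits n) \<and> (\<forall>s\<in>compat n r SS. genuinely_entangled n s)"

definition subsets_k :: "nat \<Rightarrow> nat \<Rightarrow> nat set set" where
  "subsets_k n k = {S. S \<subseteq> qubits n \<and> card S = k}"

text \<open>min over SS of max_{S in SS} |S| equals the least k admitting an SS with all |S| <= k.\<close>
definition L_num :: "nat \<Rightarrow> (nat set \<Rightarrow> nat set \<Rightarrow> complex) \<Rightarrow> nat" where
  "L_num n r = (LEAST k. \<exists>SS. determines n SS r \<and> (\<forall>S\<in>SS. card S \<le> k))"

definition l_num :: "nat \<Rightarrow> (nat set \<Rightarrow> nat set \<Rightarrow> complex) \<Rightarrow> nat" where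
  "l_num n r = (LEAST k. \<exists>SS. detects_GME n SS r \<and> (\<forall>S\<in>SS. card S \<le> k))"

definition M_num :: "nat \<Rightarrow> (nat set \<Rightarrow> nat set \<Rightarrow> complex) \<Rightarrow> nat" where
  "M_num n r = (LEAST c. \<exists>SS. SS \<subseteq> subsets_k n (L_num n r) \<and> determines n SS r \<and> card SS = c)"

definition m_num :: "nat \<Rightarrow> (nat set \<Rightarrow> nat set \<Rightarrow> complex) \<Rightarrow> nat" where
  "m_num n r = (LEAST c. \<exists>SS. SS \<subseteq> subsets_k n (l_num n r) \<and> detects_GME n SS r \<and> card SS = c)"

end

theory Submission
  imports Defs "HOL-Combinatorics.Transposition"
begin

text \<open>A symmetric state is invariant under every transposition of qubits, and this invariance
  propagates through marginals: if a state \<sigma> has the same marginal as \<rho> on a set S, positivity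
  of \<sigma> forces \<sigma> to be invariant under the transpositions inside S as well. Windows of k qubits
  in which consecutive windows share one qubit connect all n qubits after
  \<lceil>(n - 1) / (k - 1)\<rceil> windows, so every \<sigma> compatible with them is fully symmetric, and for
  symmetric states one k-qubit marginal fixes all the others.

  Conversely, fewer k-qubit sets (or sets of at most one qubit) cannot connect all qubits, so
  some bipartition A splits every measured set. Then the product of the marginals of \<rho> on A
  and on its complement has the same marginals and is biseparable; it differs from \<rho>, because
  a symmetric product state is pure and fully separable. Finally a symmetric entangled state is
  genuinely entangled: every pure state in a biseparable decomposition of \<rho> is again
  symmetric, and symmetric biseparable pure states are fully separable.\<close>

section \<open>Positive semidefinite kernels on finite label sets\<close>

definition hermitian :: "('a \<Rightarrow> 'a \<Rightarrow> complex) \<Rightarrow> bool" where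
  "hermitian r \<longleftrightarrow> (\<forall>x y. r y x = cnj (r x y))"

definition sform :: "'a set \<Rightarrow> ('a \<Rightarrow> 'a \<Rightarrow> complex) \<Rightarrow> ('a \<Rightarrow> complex) \<Rightarrow> ('a \<Rightarrow> complex) \<Rightarrow> complex" where
  "sform X r u w = (\<Sum>x\<in>X. \<Sum>y\<in>X. cnj (u x) * r x y * w y)"

abbreviation qform :: "'a set \<Rightarrow> ('a \<Rightarrow> 'a \<Rightarrow> complex) \<Rightarrow> ('a \<Rightarrow> complex) \<Rightarrow> complex" where
  "qform X r v \<equiv> sform X r v v"

definition psd_on :: "'a set \<Rightarrow> ('a \<Rightarrow> 'a \<Rightarrow> complex) \<Rightarrow> bool" where
  "psd_on X r \<longleftrightarrow> (\<forall>v. Im (qform X r v) = 0 \<and> Re (qform X r v) \<ge> 0)"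

definition ket :: "'a \<Rightarrow> 'a \<Rightarrow> complex" where
  "ket a = (\<lambda>x. if x = a then 1 else 0)"

definition gram_on :: "'a set \<Rightarrow> ('a \<Rightarrow> 'a \<Rightarrow> complex) \<Rightarrow> 'j set \<Rightarrow> ('j \<Rightarrow> 'a \<Rightarrow> complex) \<Rightarrow> bool" where
  "gram_on X r J f \<longleftrightarrow> finite J \<and> (\<forall>x\<in>X. \<forall>y\<in>X. r x y = (\<Sum>j\<in>J. f j x * cnj (f j y)))"

lemma density_iff:
  "density n r \<longleftrightarrow> is_op (qubits n) r \<and> hermitian r \<and> psd_on (Pow (qubits n)) r
     \<and> (\<Sum>x\<in>Pow (qubits n). r x x) = 1"
  unfolding density_def hermitian_def psd_on_def sform_def Let_def by blast

lemma finite_qubits [simp]: "finite (qubits n)"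
  by (simp add: qubits_def)

lemma card_qubits [simp]: "card (qubits n) = n"
  by (simp add: qubits_def)

lemma hermitian_diag_real: "hermitian r \<Longrightarrow> cnj (r x x) = r x x"
  unfolding hermitian_def by metis

lemma cnj_mult_self: "cnj z * z = complex_of_real ((cmod z)\<^sup>2)"
  by (metis complex_norm_square mult.commute)

lemma qform_add_scaled:
  "qform X r (\<lambda>x. u x + c * w x)
     = qform X r u + c * sform X r u w + cnj c * sform X r w u + (c * cnj c) * qform X r w"
  unfolding sform_def by (simp add: algebra_simps sum.distrib sum_distrib_left)

lemma linear_dominated_by_quadratic_imp_zero:
  fixes a d :: real
  assumes "\<And>t. 0 \<le> t * a + t\<^sup>2 * d"
  shows "a = 0"
proof (rule ccontr)
  assume a: "a \<noteq> 0"
  define e where "e = \<bar>d\<bar> + 1"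
  have e: "e > 0" "\<bar>d\<bar> = e - 1" unfolding e_def by auto
  define t where "t = - a / e"
  have "t * a + t\<^sup>2 * d \<le> t * a + t\<^sup>2 * \<bar>d\<bar>"
    by (simp add: mult_left_mono)
  also have "\<dots> = - a\<^sup>2 / e\<^sup>2"
    unfolding t_def e(2) using e(1) by (simp add: field_simps power2_eq_square)
  also have "\<dots> < 0"
    using a e(1) by (simp add: divide_pos_pos)
  finally show False using assms[of t] by simp
qed

text \<open>Test the form along u + c w for small real and imaginary c.\<close>

lemma psd_on_kernel:
  assumes "psd_on X r" "qform X r u = 0"
  shows "sform X r w u = 0"
proof -
  define b1 b2 d where "b1 = sform X r u w" and "b2 = sform X r w u" and "d = qform X r w"
  have dr: "Im d = 0" using assms(1) unfolding psd_on_def d_def by blast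
  have "qform X r (\<lambda>x. u x + c * w x) = c * b1 + cnj c * b2 + (c * cnj c) * d" for c
    unfolding b1_def b2_def d_def qform_add_scaled assms(2) by simp
  then have P: "Im (c * b1 + cnj c * b2 + (c * cnj c) * d) = 0 \<and> Re (c * b1 + cnj c * b2 + (c * cnj c) * d) \<ge> 0" for c
    using assms(1) unfolding psd_on_def by metis
  have "Re (b1 + b2) = 0"
  proof (rule linear_dominated_by_quadratic_imp_zero[where d = "Re d"])
    show "0 \<le> t * Re (b1 + b2) + t\<^sup>2 * Re d" for t
      using P[of "complex_of_real t"] dr by (simp add: power2_eq_square algebra_simps)
  qed
  moreover have "- Im (b1 - b2) = 0"
  proof (rule linear_dominated_by_quadratic_imp_zero[where d = "Re d"])
    show "0 \<le> t * (- Im (b1 - b2)) + t\<^sup>2 * Re d" for t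
      using P[of "\<i> * complex_of_real t"] dr by (simp add: power2_eq_square algebra_simps)
  qed
  moreover have "Im (b1 + b2) = 0"
    using P[of 1] dr by simp
  moreover have "Re (b1 - b2) = 0"
    using P[of "\<i>"] dr by (simp add: algebra_simps)
  ultimately show ?thesis unfolding b2_def[symmetric] by (simp add: complex_eq_iff)
qed

lemma sform_ket_left:
  assumes "finite X" "a \<in> X"
  shows "sform X r (ket a) u = (\<Sum>y\<in>X. r a y * u y)"
proof -
  have "sform X r (ket a) u = (\<Sum>x\<in>X. if x = a then (\<Sum>y\<in>X. r x y * u y) else 0)"
    unfolding sform_def ket_def by (intro sum.cong) auto
  then show ?thesis using assms by simp
qed

lemma sum_mult_ket:
  assumes "finite X" "b \<in> X"
  shows "(\<Sum>y\<in>X. g y * ket b y) = g b"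
proof -
  have "g y * ket b y = (if y = b then g y else 0)" for y
    by (simp add: ket_def)
  then show ?thesis using assms by simp
qed

lemma sform_ket_ket:
  "finite X \<Longrightarrow> a \<in> X \<Longrightarrow> b \<in> X \<Longrightarrow> sform X r (ket a) (ket b) = r a b"
  by (simp add: sform_ket_left sum_mult_ket)

lemma qform_ket: "finite X \<Longrightarrow> a \<in> X \<Longrightarrow> qform X r (ket a) = r a a"
  by (rule sform_ket_ket)

lemma qform_gram:
  assumes "\<And>x y. x \<in> X \<Longrightarrow> y \<in> X \<Longrightarrow> r x y = (\<Sum>j\<in>J. f j x * cnj (f j y))"
  shows "qform X r v = (\<Sum>j\<in>J. cnj (\<Sum>y\<in>X. cnj (f j y) * v y) * (\<Sum>y\<in>X. cnj (f j y) * v y))"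
proof -
  have "qform X r v = (\<Sum>x\<in>X. \<Sum>y\<in>X. \<Sum>j\<in>J. (cnj (v x) * f j x) * (cnj (f j y) * v y))"
    unfolding sform_def
    by (intro sum.cong refl) (simp add: assms sum_distrib_left sum_distrib_right mult.assoc)
  also have "\<dots> = (\<Sum>j\<in>J. (\<Sum>x\<in>X. cnj (v x) * f j x) * (\<Sum>y\<in>X. cnj (f j y) * v y))"
    by (simp add: sum_product sum.swap[of _ J] sum.swap[of _ J X])
  finally show ?thesis by (simp add: mult.commute)
qed

lemma qform_gram_real:
  assumes "gram_on X r J f"
  shows "qform X r v = complex_of_real (\<Sum>j\<in>J. (cmod (\<Sum>y\<in>X. cnj (f j y) * v y))\<^sup>2)"
proof -
  have "r x y = (\<Sum>j\<in>J. f j x * cnj (f j y))" if "x \<in> X" "y \<in> X" for x y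
    using assms that unfolding gram_on_def by blast
  then show ?thesis by (simp only: qform_gram cnj_mult_self of_real_sum)
qed

lemma gram_on_imp_psd_on: "gram_on X r J f \<Longrightarrow> psd_on X r"
  unfolding psd_on_def by (simp add: qform_gram_real sum_nonneg)

lemma gram_on_qform_zero:
  assumes "gram_on X r J f" "qform X r v = 0" "j \<in> J"
  shows "(\<Sum>y\<in>X. cnj (f j y) * v y) = 0"
proof -
  have "complex_of_real (\<Sum>j\<in>J. (cmod (\<Sum>y\<in>X. cnj (f j y) * v y))\<^sup>2) = 0"
    by (subst qform_gram_real[OF assms(1), symmetric]) (rule assms(2))
  then have "(\<Sum>j\<in>J. (cmod (\<Sum>y\<in>X. cnj (f j y) * v y))\<^sup>2) = 0"
    by (simp only: of_real_eq_0_iff)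
  then show ?thesis
    using assms(1,3) sum_nonneg_eq_0_iff[of J "\<lambda>j. (cmod (\<Sum>y\<in>X. cnj (f j y) * v y))\<^sup>2"]
    unfolding gram_on_def by simp
qed

lemma psd_on_insert_imp_psd_on:
  assumes "finite X" "a \<notin> X" "psd_on (insert a X) r"
  shows "psd_on X r"
  unfolding psd_on_def
proof
  fix v
  have "qform X r v = qform (insert a X) r (v(a := 0))"
    using assms(1,2) unfolding sform_def by (auto intro!: sum.cong)
  then show "Im (qform X r v) = 0 \<and> Re (qform X r v) \<ge> 0"
    using assms(3) unfolding psd_on_def by metis
qed

lemma qform_plus_rank_one:
  "qform X (\<lambda>x y. r x y + g x * cnj (g y)) v
     = qform X r v + cnj (\<Sum>y\<in>X. cnj (g y) * v y) * (\<Sum>y\<in>X. cnj (g y) * v y)"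
proof -
  have "qform X (\<lambda>x y. g x * cnj (g y)) v
      = (\<Sum>j\<in>{()}. cnj (\<Sum>y\<in>X. cnj (g y) * v y) * (\<Sum>y\<in>X. cnj (g y) * v y))"
    by (rule qform_gram[where f = "\<lambda>_. g"]) simp
  moreover have "qform X (\<lambda>x y. r x y + g x * cnj (g y)) v = qform X r v + qform X (\<lambda>x y. g x * cnj (g y)) v"
    unfolding sform_def by (simp add: algebra_simps sum.distrib)
  ultimately show ?thesis by simp
qed

lemma psd_on_zero_diag:
  assumes "finite X" "psd_on X r" "hermitian r" "a \<in> X" "r a a = 0" "y \<in> X"
  shows "r y a = 0" "r a y = 0"
proof -
  have "sform X r (ket y) (ket a) = 0"
    using psd_on_kernel[OF assms(2)] qform_ket[OF assms(1,4)] assms(5) by simp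
  then show "r y a = 0" using sform_ket_ket[OF assms(1,6,4), of r] by simp
  then show "r a y = 0" using assms(3) unfolding hermitian_def by (metis complex_cnj_zero)
qed

lemma psd_on_schur_complement:
  fixes d :: real
  assumes fin: "finite X" and a: "a \<notin> X" and herm: "hermitian r"
    and psd: "psd_on (insert a X) r" and d: "d > 0" "r a a = complex_of_real (d * d)"
  defines "g \<equiv> \<lambda>x. r x a / complex_of_real d"
  shows "psd_on X (\<lambda>x y. r x y - g x * cnj (g y))"
  unfolding psd_on_def
proof
  fix v
  define r' where "r' x y = r x y - g x * cnj (g y)" for x y
  have ga: "g a = complex_of_real d"
    using d by (simp add: g_def)
  have r'_row: "r' a y = 0" for y
  proof -
    have "cnj (r y a) = r a y" using herm unfolding hermitian_def by metis
    then show ?thesis unfolding r'_def ga using d by (simp add: g_def)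
  qed
  have r'_col: "r' y a = 0" for y
    unfolding r'_def ga using d by (simp add: g_def)
  define v' where "v' = v(a := - (\<Sum>y\<in>X. cnj (g y) * v y) / complex_of_real d)"
  have orth: "(\<Sum>y\<in>insert a X. cnj (g y) * v' y) = 0"
  proof -
    have "(\<Sum>y\<in>X. cnj (g y) * v' y) = (\<Sum>y\<in>X. cnj (g y) * v y)"
      unfolding v'_def using a by (intro sum.cong) auto
    then show ?thesis using fin a d by (simp add: ga v'_def)
  qed
  have "qform (insert a X) r v' = qform (insert a X) r' v'"
    using qform_plus_rank_one[of "insert a X" r' g v'] orth unfolding r'_def by simp
  also have "\<dots> = qform X r' v'"
    using fin a r'_row r'_col unfolding sform_def by simp
  also have "\<dots> = qform X r' v"
    using a unfolding sform_def v'_def by (intro sum.cong) auto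
  finally show "Im (qform X (\<lambda>x y. r x y - g x * cnj (g y)) v) = 0
      \<and> Re (qform X (\<lambda>x y. r x y - g x * cnj (g y)) v) \<ge> 0"
    using psd unfolding psd_on_def r'_def by metis
qed

lemma gram_on_insert:
  assumes f: "gram_on X (\<lambda>x y. r x y - g x * cnj (g y)) {..<k} f" and a: "a \<notin> X"
    and row: "\<And>y. y \<in> insert a X \<Longrightarrow> r a y = g a * cnj (g y) \<and> r y a = g y * cnj (g a)"
  shows "gram_on (insert a X) r {..<Suc k} (\<lambda>i x. if i = k then g x else if x = a then 0 else f i x)"
  unfolding gram_on_def
proof (intro conjI ballI)
  fix x y assume x: "x \<in> insert a X" and y: "y \<in> insert a X"
  define f' where "f' i x = (if i = k then g x else if x = a then 0 else f i x)" for i x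
  have "(\<Sum>i<Suc k. f' i x * cnj (f' i y)) = (\<Sum>i<k. f' i x * cnj (f' i y)) + g x * cnj (g y)"
    by (simp add: f'_def)
  also have "\<dots> = r x y"
  proof (cases "x = a \<or> y = a")
    case True
    then have "(\<Sum>i<k. f' i x * cnj (f' i y)) = 0"
      by (intro sum.neutral) (auto simp: f'_def)
    then show ?thesis using True row x y by auto
  next
    case False
    then have "(\<Sum>i<k. f' i x * cnj (f' i y)) = r x y - g x * cnj (g y)"
      using f x y unfolding gram_on_def f'_def by simp
    then show ?thesis by simp
  qed
  finally show "r x y = (\<Sum>i<Suc k. f' i x * cnj (f' i y))" by simp
qed simp

lemma psd_on_peel_rank_one:
  assumes fin: "finite X" and a: "a \<notin> X" and herm: "hermitian r" and psd: "psd_on (insert a X) r"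
  obtains g where "psd_on X (\<lambda>x y. r x y - g x * cnj (g y))"
    "\<And>y. y \<in> insert a X \<Longrightarrow> r a y = g a * cnj (g y) \<and> r y a = g y * cnj (g a)"
proof (cases "r a a = 0")
  case True
  show thesis
  proof (rule that[of "\<lambda>_. 0"])
    show "psd_on X (\<lambda>x y. r x y - 0 * cnj 0)"
      using psd_on_insert_imp_psd_on[OF fin a psd] by simp
    show "r a y = 0 * cnj 0 \<and> r y a = 0 * cnj 0" if "y \<in> insert a X" for y
      using psd_on_zero_diag[OF _ psd herm _ True that] fin by simp
  qed
next
  case False
  have "Im (qform (insert a X) r (ket a)) = 0 \<and> Re (qform (insert a X) r (ket a)) \<ge> 0"
    using psd unfolding psd_on_def by blast
  then have "Im (r a a) = 0" "Re (r a a) \<ge> 0"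
    using fin by (simp_all add: qform_ket)
  define d where "d = sqrt (Re (r a a))"
  have d: "d > 0" "r a a = complex_of_real (d * d)"
    using \<open>Im (r a a) = 0\<close> \<open>Re (r a a) \<ge> 0\<close> False by (auto simp: d_def complex_eq_iff)
  show thesis
  proof (rule that[of "\<lambda>x. r x a / complex_of_real d"])
    show "psd_on X (\<lambda>x y. r x y - r x a / complex_of_real d * cnj (r y a / complex_of_real d))"
      using psd_on_schur_complement[OF fin a herm psd d] .
    have "cnj (r y a) = r a y" for y using herm unfolding hermitian_def by metis
    then show "r a y = r a a / complex_of_real d * cnj (r y a / complex_of_real d)
        \<and> r y a = r y a / complex_of_real d * cnj (r a a / complex_of_real d)" for y
      using d by simp
  qed
qed

theorem psd_on_gram_decomposition:
  "finite X \<Longrightarrow> hermitian r \<Longrightarrow> psd_on X r \<Longrightarrow> \<exists>k (f :: nat \<Rightarrow> 'a \<Rightarrow> complex). gram_on X r {..<k} f"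
proof (induction X arbitrary: r rule: finite_induct)
  case empty
  then show ?case by (auto simp: gram_on_def)
next
  case (insert a X)
  have herm: "hermitian r" using insert.prems by blast
  obtain g where psd': "psd_on X (\<lambda>x y. r x y - g x * cnj (g y))"
    and row: "\<And>y. y \<in> insert a X \<Longrightarrow> r a y = g a * cnj (g y) \<and> r y a = g y * cnj (g a)"
    using psd_on_peel_rank_one[OF insert.hyps herm] insert.prems by blast
  have "hermitian (\<lambda>x y. r x y - g x * cnj (g y))"
    unfolding hermitian_def
  proof (intro allI)
    fix x y
    have "r y x = cnj (r x y)" using herm unfolding hermitian_def by blast
    then show "r y x - g y * cnj (g x) = cnj (r x y - g x * cnj (g y))" by simp
  qed
  then obtain k and f :: "nat \<Rightarrow> 'a \<Rightarrow> complex" where "gram_on X (\<lambda>x y. r x y - g x * cnj (g y)) {..<k} f"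
    using insert.IH[OF _ psd'] by blast
  then have "gram_on (insert a X) r {..<Suc k} (\<lambda>i x. if i = k then g x else if x = a then 0 else f i x)"
    using gram_on_insert[of X r g k f a] insert.hyps(2) row by blast
  then show ?case by blast
qed

section \<open>Partial traces and tensor products\<close>

definition ptrace_on :: "'a set \<Rightarrow> ('a set \<Rightarrow> 'a set \<Rightarrow> complex) \<Rightarrow> 'a set \<Rightarrow> 'a set \<Rightarrow> 'a set \<Rightarrow> complex" where
  "ptrace_on V r S x y = (if x \<subseteq> S \<and> y \<subseteq> S then (\<Sum>z\<in>Pow (V - S). r (x \<union> z) (y \<union> z)) else 0)"

definition tensor_op :: "'a set \<Rightarrow> 'a set \<Rightarrow> ('a set \<Rightarrow> 'a set \<Rightarrow> complex) \<Rightarrow> ('a set \<Rightarrow> 'a set \<Rightarrow> complex)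
    \<Rightarrow> 'a set \<Rightarrow> 'a set \<Rightarrow> complex" where
  "tensor_op V A r1 r2 x y =
     (if x \<subseteq> V \<and> y \<subseteq> V then r1 (x \<inter> A) (y \<inter> A) * r2 (x - A) (y - A) else 0)"

lemma ptrace_eq_ptrace_on: "ptrace n = ptrace_on (qubits n)"
  by (intro ext) (simp add: ptrace_def ptrace_on_def)

lemma ptrace_on_outside: "\<not> (x \<subseteq> S \<and> y \<subseteq> S) \<Longrightarrow> ptrace_on V r S x y = 0"
  unfolding ptrace_on_def by auto

lemma sum_Pow_Un:
  assumes "finite A" "finite B" "A \<inter> B = {}"
  shows "(\<Sum>z\<in>Pow (A \<union> B). f z) = (\<Sum>a\<in>Pow A. \<Sum>b\<in>Pow B. f (a \<union> b))"
proof -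
  have "(\<Sum>a\<in>Pow A. \<Sum>b\<in>Pow B. f (a \<union> b)) = (\<Sum>p\<in>Pow A \<times> Pow B. f (fst p \<union> snd p))"
    by (simp add: sum.cartesian_product split_def)
  also have "\<dots> = (\<Sum>z\<in>Pow (A \<union> B). f z)"
    by (rule sum.reindex_bij_witness[where i = "\<lambda>z. (z \<inter> A, z \<inter> B)" and j = "\<lambda>p. fst p \<union> snd p"])
       (use assms in auto)
  finally show ?thesis by simp
qed

lemma sum_Pow_split:
  assumes "finite V" "S \<subseteq> V"
  shows "(\<Sum>z\<in>Pow V. f z) = (\<Sum>a\<in>Pow S. \<Sum>b\<in>Pow (V - S). f (a \<union> b))"
proof -
  have "V = S \<union> (V - S)" using assms(2) by auto
  then show ?thesis
    using sum_Pow_Un[of S "V - S" f] assms finite_subset by (metis Diff_disjoint finite_Diff)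
qed

lemma ptrace_on_ptrace_on:
  assumes "finite V" "T \<subseteq> S" "S \<subseteq> V"
  shows "ptrace_on S (ptrace_on V r S) T = ptrace_on V r T"
proof (intro ext)
  fix x y
  show "ptrace_on S (ptrace_on V r S) T x y = ptrace_on V r T x y"
  proof (cases "x \<subseteq> T \<and> y \<subseteq> T")
    case True
    have VT: "V - T = (S - T) \<union> (V - S)" using assms by auto
    have "ptrace_on V r T x y = (\<Sum>z\<in>Pow ((S - T) \<union> (V - S)). r (x \<union> z) (y \<union> z))"
      using True by (simp add: ptrace_on_def VT)
    also have "\<dots> = (\<Sum>a\<in>Pow (S - T). \<Sum>b\<in>Pow (V - S). r (x \<union> (a \<union> b)) (y \<union> (a \<union> b)))"
      by (rule sum_Pow_Un) (use assms in \<open>auto intro: finite_subset\<close>)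
    also have "\<dots> = (\<Sum>a\<in>Pow (S - T). ptrace_on V r S (x \<union> a) (y \<union> a))"
      using True assms by (intro sum.cong refl) (auto simp: ptrace_on_def Un_assoc)
    also have "\<dots> = ptrace_on S (ptrace_on V r S) T x y"
      using True by (simp add: ptrace_on_def)
    finally show ?thesis by simp
  qed (simp add: ptrace_on_outside)
qed

lemma ptrace_on_eq_subset:
  assumes "finite V" "T \<subseteq> S" "S \<subseteq> V" "ptrace_on V s S = ptrace_on V r S"
  shows "ptrace_on V s T = ptrace_on V r T"
  using ptrace_on_ptrace_on[OF assms(1-3)] assms(4) by metis

lemma trace_ptrace_on:
  assumes "finite V" "S \<subseteq> V"
  shows "(\<Sum>x\<in>Pow S. ptrace_on V r S x x) = (\<Sum>x\<in>Pow V. r x x)"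
  using assms by (simp add: ptrace_on_def sum_Pow_split[OF assms])

lemma hermitian_ptrace_on:
  assumes "hermitian r"
  shows "hermitian (ptrace_on V r S)"
  unfolding hermitian_def
proof (intro allI)
  fix x y
  have "r (y \<union> z) (x \<union> z) = cnj (r (x \<union> z) (y \<union> z))" for z
    using assms unfolding hermitian_def by blast
  then show "ptrace_on V r S y x = cnj (ptrace_on V r S x y)"
    unfolding ptrace_on_def by auto
qed

lemma gram_on_ptrace_on:
  assumes "finite V" "S \<subseteq> V" "gram_on (Pow V) r J f"
  shows "gram_on (Pow S) (ptrace_on V r S) (J \<times> Pow (V - S)) (\<lambda>p a. f (fst p) (a \<union> snd p))"
  unfolding gram_on_def
proof (intro conjI ballI)
  show "finite (J \<times> Pow (V - S))" using assms unfolding gram_on_def by simp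
  fix x y assume x: "x \<in> Pow S" and y: "y \<in> Pow S"
  have "ptrace_on V r S x y = (\<Sum>z\<in>Pow (V - S). \<Sum>j\<in>J. f j (x \<union> z) * cnj (f j (y \<union> z)))"
  proof -
    have "r (x \<union> z) (y \<union> z) = (\<Sum>j\<in>J. f j (x \<union> z) * cnj (f j (y \<union> z)))" if "z \<in> Pow (V - S)" for z
    proof -
      have "x \<union> z \<in> Pow V" "y \<union> z \<in> Pow V" using x y that assms(2) by auto
      then show ?thesis using assms(3) unfolding gram_on_def by blast
    qed
    then show ?thesis using x y unfolding ptrace_on_def by (auto intro: sum.cong)
  qed
  also have "\<dots> = (\<Sum>p\<in>J \<times> Pow (V - S). f (fst p) (x \<union> snd p) * cnj (f (fst p) (y \<union> snd p)))"
    by (subst sum.swap) (simp add: sum.cartesian_product split_def)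
  finally show "ptrace_on V r S x y
      = (\<Sum>p\<in>J \<times> Pow (V - S). f (fst p) (x \<union> snd p) * cnj (f (fst p) (y \<union> snd p)))" .
qed

lemma gram_on_tensor_op:
  assumes "gram_on (Pow A) r1 J1 f1" "gram_on (Pow (V - A)) r2 J2 f2"
  shows "gram_on (Pow V) (tensor_op V A r1 r2) (J1 \<times> J2) (\<lambda>p x. f1 (fst p) (x \<inter> A) * f2 (snd p) (x - A))"
  unfolding gram_on_def
proof (intro conjI ballI)
  show "finite (J1 \<times> J2)" using assms unfolding gram_on_def by simp
  fix x y assume x: "x \<in> Pow V" and y: "y \<in> Pow V"
  have "tensor_op V A r1 r2 x y
      = (\<Sum>i\<in>J1. f1 i (x \<inter> A) * cnj (f1 i (y \<inter> A))) * (\<Sum>j\<in>J2. f2 j (x - A) * cnj (f2 j (y - A)))"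
  proof -
    have "x \<inter> A \<in> Pow A" "y \<inter> A \<in> Pow A" "x - A \<in> Pow (V - A)" "y - A \<in> Pow (V - A)"
      using x y by auto
    then show ?thesis using x y assms unfolding tensor_op_def gram_on_def by simp
  qed
  also have "\<dots> = (\<Sum>p\<in>J1 \<times> J2. f1 (fst p) (x \<inter> A) * f2 (snd p) (x - A)
      * cnj (f1 (fst p) (y \<inter> A) * f2 (snd p) (y - A)))"
    by (simp add: sum_product sum.cartesian_product split_def algebra_simps)
  finally show "tensor_op V A r1 r2 x y = (\<Sum>p\<in>J1 \<times> J2. f1 (fst p) (x \<inter> A) * f2 (snd p) (x - A)
      * cnj (f1 (fst p) (y \<inter> A) * f2 (snd p) (y - A)))" .
qed

lemma hermitian_tensor_op:
  assumes "hermitian r1" "hermitian r2"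
  shows "hermitian (tensor_op V A r1 r2)"
  unfolding hermitian_def
proof (intro allI)
  fix x y
  have "r1 (y \<inter> A) (x \<inter> A) = cnj (r1 (x \<inter> A) (y \<inter> A))" "r2 (y - A) (x - A) = cnj (r2 (x - A) (y - A))"
    using assms unfolding hermitian_def by blast+
  then show "tensor_op V A r1 r2 y x = cnj (tensor_op V A r1 r2 x y)"
    unfolding tensor_op_def by auto
qed

lemma trace_tensor_op:
  assumes "finite V" "A \<subseteq> V"
  shows "(\<Sum>x\<in>Pow V. tensor_op V A r1 r2 x x) = (\<Sum>a\<in>Pow A. r1 a a) * (\<Sum>b\<in>Pow (V - A). r2 b b)"
proof -
  have "(\<Sum>x\<in>Pow V. tensor_op V A r1 r2 x x) = (\<Sum>a\<in>Pow A. \<Sum>b\<in>Pow (V - A). r1 a a * r2 b b)"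
    unfolding sum_Pow_split[OF assms]
  proof (intro sum.cong refl)
    fix a b assume "a \<in> Pow A" "b \<in> Pow (V - A)"
    then have "(a \<union> b) \<inter> A = a" "(a \<union> b) - A = b" "a \<union> b \<subseteq> V" using assms by auto
    then show "tensor_op V A r1 r2 (a \<union> b) (a \<union> b) = r1 a a * r2 b b" by (simp add: tensor_op_def)
  qed
  then show ?thesis by (simp add: sum_product)
qed

lemma ptrace_on_tensor_op:
  assumes fin: "finite V" and AV: "A \<subseteq> V" and SV: "S \<subseteq> V" and x: "x \<subseteq> S" and y: "y \<subseteq> S"
  shows "ptrace_on V (tensor_op V A r1 r2) S x y
    = ptrace_on A r1 (S \<inter> A) (x \<inter> A) (y \<inter> A) * ptrace_on (V - A) r2 (S - A) (x - A) (y - A)"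
proof -
  have VS: "V - S = (A - S) \<union> (V - A - S)" using AV by auto
  have "ptrace_on V (tensor_op V A r1 r2) S x y
      = (\<Sum>a\<in>Pow (A - S). \<Sum>b\<in>Pow (V - A - S). tensor_op V A r1 r2 (x \<union> (a \<union> b)) (y \<union> (a \<union> b)))"
    using x y by (simp add: ptrace_on_def VS, intro sum_Pow_Un) (use fin AV in \<open>auto intro: finite_subset\<close>)
  also have "\<dots> = (\<Sum>a\<in>Pow (A - S). \<Sum>b\<in>Pow (V - A - S).
      r1 (x \<inter> A \<union> a) (y \<inter> A \<union> a) * r2 ((x - A) \<union> b) ((y - A) \<union> b))"
  proof (intro sum.cong refl)
    fix a b assume "a \<in> Pow (A - S)" "b \<in> Pow (V - A - S)"
    then have "(x \<union> (a \<union> b)) \<inter> A = x \<inter> A \<union> a" "(y \<union> (a \<union> b)) \<inter> A = y \<inter> A \<union> a"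
      "(x \<union> (a \<union> b)) - A = (x - A) \<union> b" "(y \<union> (a \<union> b)) - A = (y - A) \<union> b"
      "x \<union> (a \<union> b) \<subseteq> V" "y \<union> (a \<union> b) \<subseteq> V" using AV SV x y by auto
    then show "tensor_op V A r1 r2 (x \<union> (a \<union> b)) (y \<union> (a \<union> b))
        = r1 (x \<inter> A \<union> a) (y \<inter> A \<union> a) * r2 ((x - A) \<union> b) ((y - A) \<union> b)"
      by (simp add: tensor_op_def)
  qed
  also have "\<dots> = ptrace_on A r1 (S \<inter> A) (x \<inter> A) (y \<inter> A) * ptrace_on (V - A) r2 (S - A) (x - A) (y - A)"
  proof -
    have "A - S \<inter> A = A - S" "V - A - (S - A) = V - A - S" by auto
    then show ?thesis using x y by (auto simp: ptrace_on_def sum_product)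
  qed
  finally show ?thesis .
qed

section \<open>Pure states and convex decompositions\<close>

definition sqnorm :: "'a set \<Rightarrow> ('a set \<Rightarrow> complex) \<Rightarrow> real" where
  "sqnorm V g = (\<Sum>x\<in>Pow V. (cmod (g x))\<^sup>2)"

definition normalize_vec :: "'a set \<Rightarrow> ('a set \<Rightarrow> complex) \<Rightarrow> 'a set \<Rightarrow> complex" where
  "normalize_vec V g x = (if x \<subseteq> V then g x / complex_of_real (sqrt (sqnorm V g)) else 0)"

lemma sqnorm_nonneg: "sqnorm V g \<ge> 0"
  unfolding sqnorm_def by (simp add: sum_nonneg)

lemma sqnorm_eq_0: "finite V \<Longrightarrow> sqnorm V g = 0 \<Longrightarrow> x \<subseteq> V \<Longrightarrow> g x = 0"
  unfolding sqnorm_def using sum_nonneg_eq_0_iff[of "Pow V" "\<lambda>x. (cmod (g x))\<^sup>2"] by auto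

lemma unit_vec_normalize_vec:
  assumes "finite V" "sqnorm V g > 0"
  shows "unit_vec V (normalize_vec V g)"
proof -
  have "(\<Sum>x\<in>Pow V. (cmod (normalize_vec V g x))\<^sup>2) = (\<Sum>x\<in>Pow V. (cmod (g x))\<^sup>2 / sqnorm V g)"
    using assms by (intro sum.cong refl) (auto simp: normalize_vec_def norm_divide power_divide)
  also have "\<dots> = sqnorm V g / sqnorm V g"
    by (simp only: sqnorm_def sum_divide_distrib)
  finally show ?thesis using assms by (simp add: unit_vec_def is_vec_def normalize_vec_def)
qed

lemma sqnorm_product:
  assumes "finite U" "S \<subseteq> U" "\<And>x. x \<subseteq> U \<Longrightarrow> \<Phi> x = g (x \<inter> S) * h (x - S)"
  shows "sqnorm U \<Phi> = sqnorm S g * sqnorm (U - S) h"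
proof -
  have "sqnorm U \<Phi> = (\<Sum>a\<in>Pow S. \<Sum>b\<in>Pow (U - S). (cmod (g a))\<^sup>2 * (cmod (h b))\<^sup>2)"
    unfolding sqnorm_def sum_Pow_split[OF assms(1,2)]
  proof (intro sum.cong refl)
    fix a b assume "a \<in> Pow S" "b \<in> Pow (U - S)"
    then have "(a \<union> b) \<inter> S = a" "(a \<union> b) - S = b" "a \<union> b \<subseteq> U" using assms by auto
    then show "(cmod (\<Phi> (a \<union> b)))\<^sup>2 = (cmod (g a))\<^sup>2 * (cmod (h b))\<^sup>2"
      using assms(3)[of "a \<union> b"] by (simp add: norm_mult power_mult_distrib)
  qed
  then show ?thesis by (simp add: sqnorm_def sum_product)
qed

text \<open>Any factorization of a unit vector, however badly scaled, can be renormalized.\<close>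

lemma product_wrt_of_factorization:
  assumes un: "unit_vec (qubits n) \<Phi>" and S: "S \<subseteq> qubits n"
    and fac: "\<And>x. x \<subseteq> qubits n \<Longrightarrow> \<Phi> x = g (x \<inter> S) * h (x - S)"
  shows "product_wrt n S \<Phi>"
proof -
  let ?U = "qubits n"
  have fin: "finite S" "finite (?U - S)" using finite_subset[OF S] by auto
  have "sqnorm ?U \<Phi> = 1" using un unfolding unit_vec_def sqnorm_def by simp
  then have GH: "sqnorm S g * sqnorm (?U - S) h = 1" using sqnorm_product[of ?U S \<Phi> g h] S fac by simp
  then have pos: "sqnorm S g > 0" "sqnorm (?U - S) h > 0"
    using sqnorm_nonneg[of S g] sqnorm_nonneg[of "?U - S" h]
    by (metis less_eq_real_def mult_eq_0_iff zero_neq_one)+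
  have "complex_of_real (sqrt (sqnorm S g)) * complex_of_real (sqrt (sqnorm (?U - S) h)) = 1"
    using GH by (metis of_real_1 of_real_mult real_sqrt_mult real_sqrt_one)
  then have "\<forall>x\<subseteq>?U. \<Phi> x = normalize_vec S g (x \<inter> S) * normalize_vec (?U - S) h (x - S)"
    using fac by (auto simp: normalize_vec_def field_simps)
  then show ?thesis
    unfolding product_wrt_def using unit_vec_normalize_vec[OF fin(1) pos(1)] unit_vec_normalize_vec[OF fin(2) pos(2)] by blast
qed

lemma density_gram:
  assumes "density n r"
  obtains k and f :: "nat \<Rightarrow> nat set \<Rightarrow> complex" where "gram_on (Pow (qubits n)) r {..<k} f"
  using psd_on_gram_decomposition[of "Pow (qubits n)" r] assms unfolding density_iff by auto

lemma density_proj: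
  assumes u: "unit_vec (qubits n) \<psi>"
  shows "density n (proj \<psi>)"
proof -
  let ?U = "qubits n"
  have "is_op ?U (proj \<psi>)"
    using u unfolding unit_vec_def is_op_def is_vec_def proj_def by auto
  moreover have "hermitian (proj \<psi>)"
    unfolding hermitian_def proj_def by simp
  moreover have "psd_on (Pow ?U) (proj \<psi>)"
    by (rule gram_on_imp_psd_on[of _ _ "{()}" "\<lambda>_. \<psi>"]) (simp add: gram_on_def proj_def)
  moreover have "proj \<psi> x x = complex_of_real ((cmod (\<psi> x))\<^sup>2)" for x
    unfolding proj_def by (metis complex_norm_square)
  then have "(\<Sum>x\<in>Pow ?U. proj \<psi> x x) = complex_of_real (\<Sum>x\<in>Pow ?U. (cmod (\<psi> x))\<^sup>2)"
    by simp
  ultimately show ?thesis using u unfolding density_iff unit_vec_def by simp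
qed

lemma gram_on_diag:
  "gram_on X r J f \<Longrightarrow> x \<in> X \<Longrightarrow> r x x = complex_of_real (\<Sum>j\<in>J. (cmod (f j x))\<^sup>2)"
  unfolding gram_on_def by (simp add: complex_norm_square del: of_real_power)

text \<open>Vanishing Gram vectors get weight zero and are replaced by the dummy state.\<close>

lemma sqnorm_proj_normalize_vec:
  assumes fin: "finite V" and "x \<subseteq> V" "y \<subseteq> V"
  shows "complex_of_real (sqnorm V g) * proj (if sqnorm V g > 0 then normalize_vec V g else \<psi>\<^sub>0) x y
    = g x * cnj (g y)"
proof (cases "sqnorm V g > 0")
  case True
  define s where "s = complex_of_real (sqrt (sqnorm V g))"
  have "complex_of_real (sqnorm V g) = s * s" "s \<noteq> 0"
    using True unfolding s_def by (simp_all flip: of_real_mult)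
  then show ?thesis
    using assms True unfolding proj_def normalize_vec_def s_def by simp
next
  case False
  then have "sqnorm V g = 0" using sqnorm_nonneg[of V g] by linarith
  then show ?thesis using sqnorm_eq_0[OF fin] assms by simp
qed

lemma convex_pure_of_gram:
  assumes fin: "finite V" and r: "gram_on (Pow V) r J f" and op: "is_op V r"
    and tr: "(\<Sum>x\<in>Pow V. r x x) = 1"
    and P: "\<And>j. j \<in> J \<Longrightarrow> sqnorm V (f j) > 0 \<Longrightarrow> P (normalize_vec V (f j))"
    and P0: "P \<psi>\<^sub>0" and v0: "is_vec V \<psi>\<^sub>0"
  shows "convex_pure P r"
proof -
  have finJ: "finite J" using r unfolding gram_on_def by simp
  obtain h where h: "bij_betw h {..<card J} J"
    using ex_bij_betw_nat_finite[OF finJ] by (auto simp: atLeast0LessThan)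
  define p where "p i = sqnorm V (f (h i))" for i
  define psi where "psi i = (if p i > 0 then normalize_vec V (f (h i)) else \<psi>\<^sub>0)" for i
  have reindex: "(\<Sum>i<card J. g (h i)) = (\<Sum>j\<in>J. g j)" for g
    using sum.reindex_bij_betw[OF h] by simp
  have hJ: "h i \<in> J" if "i < card J" for i
    using h that unfolding bij_betw_def by auto
  have "p i \<ge> 0" for i
    by (simp add: p_def sqnorm_nonneg)
  moreover have "P (psi i)" if "i < card J" for i
    using P[OF hJ[OF that]] P0 unfolding psi_def p_def by auto
  ultimately have weights: "\<forall>i<card J. p i \<ge> 0 \<and> P (psi i)" by blast
  have "(\<Sum>i<card J. p i) = (\<Sum>j\<in>J. sqnorm V (f j))"
    unfolding p_def by (rule reindex)
  also have "\<dots> = (\<Sum>x\<in>Pow V. \<Sum>j\<in>J. (cmod (f j x))\<^sup>2)"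
    unfolding sqnorm_def by (rule sum.swap)
  also have "complex_of_real \<dots> = 1"
    using tr gram_on_diag[OF r] by simp
  finally have total: "(\<Sum>i<card J. p i) = 1" by (metis of_real_eq_1_iff)
  have weighted_term: "complex_of_real (p i) * proj (psi i) x y = f (h i) x * cnj (f (h i) y)"
    if "x \<subseteq> V" "y \<subseteq> V" for i x y
    using sqnorm_proj_normalize_vec[OF fin that] unfolding p_def psi_def .
  have "r = (\<lambda>x y. \<Sum>i<card J. complex_of_real (p i) * proj (psi i) x y)"
  proof (intro ext)
    fix x y
    show "r x y = (\<Sum>i<card J. complex_of_real (p i) * proj (psi i) x y)"
    proof (cases "x \<subseteq> V \<and> y \<subseteq> V")
      case True
      then show ?thesis
        using r reindex[of "\<lambda>j. f j x * cnj (f j y)"]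
        unfolding weighted_term[OF conjunct1[OF True] conjunct2[OF True]] gram_on_def by simp
    next
      case False
      have "is_vec V (psi i)" for i
        using v0 unfolding psi_def is_vec_def normalize_vec_def by auto
      then have "proj (psi i) x y = 0" for i
        using False unfolding is_vec_def proj_def by auto
      then show ?thesis using op False unfolding is_op_def by simp
    qed
  qed
  then show ?thesis unfolding convex_pure_def using weights total by blast
qed

lemma unit_vec_ket_empty:
  assumes "finite U"
  shows "unit_vec U (ket {})"
proof -
  have "(\<Sum>x\<in>Pow U. (cmod (ket {} x))\<^sup>2) = (\<Sum>x\<in>Pow U. if x = {} then 1 else 0)"
    by (rule sum.cong) (simp_all add: ket_def)
  then have "(\<Sum>x\<in>Pow U. (cmod (ket {} x))\<^sup>2) = 1"
    using assms by simp
  moreover have "is_vec U (ket {})"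
    by (simp add: is_vec_def ket_def)
  ultimately show ?thesis unfolding unit_vec_def by blast
qed

section \<open>The product of complementary marginals\<close>

definition marginal_product :: "nat \<Rightarrow> (nat set \<Rightarrow> nat set \<Rightarrow> complex) \<Rightarrow> nat set \<Rightarrow> nat set \<Rightarrow> nat set \<Rightarrow> complex" where
  "marginal_product n r A =
     tensor_op (qubits n) A (ptrace_on (qubits n) r A) (ptrace_on (qubits n) r (qubits n - A))"

lemma trace_ptrace_on_density:
  "density n r \<Longrightarrow> S \<subseteq> qubits n \<Longrightarrow> (\<Sum>x\<in>Pow S. ptrace_on (qubits n) r S x x) = 1"
  using trace_ptrace_on[of "qubits n" S r] unfolding density_iff by simp

lemma gram_on_marginal_product:
  assumes f: "gram_on (Pow (qubits n)) r J f" and A: "A \<subseteq> qubits n"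
  shows "gram_on (Pow (qubits n)) (marginal_product n r A) ((J \<times> Pow (qubits n - A)) \<times> (J \<times> Pow A))
    (\<lambda>p x. f (fst (fst p)) (x \<inter> A \<union> snd (fst p)) * f (fst (snd p)) ((x - A) \<union> snd (snd p)))"
proof -
  have "gram_on (Pow (qubits n - A)) (ptrace_on (qubits n) r (qubits n - A)) (J \<times> Pow (qubits n - (qubits n - A)))
      (\<lambda>p a. f (fst p) (a \<union> snd p))"
    by (rule gram_on_ptrace_on) (use f in auto)
  moreover have "qubits n - (qubits n - A) = A" using A by auto
  ultimately show ?thesis
    using gram_on_tensor_op[OF gram_on_ptrace_on[OF _ A f]] unfolding marginal_product_def by simp
qed

lemma density_marginal_product:
  assumes d: "density n r" and A: "A \<subseteq> qubits n"
  shows "density n (marginal_product n r A)"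
proof -
  let ?U = "qubits n"
  obtain k and f :: "nat \<Rightarrow> nat set \<Rightarrow> complex" where "gram_on (Pow ?U) r {..<k} f"
    using density_gram[OF d] .
  then have "psd_on (Pow ?U) (marginal_product n r A)"
    by (rule gram_on_imp_psd_on[OF gram_on_marginal_product[OF _ A]])
  moreover have "is_op ?U (marginal_product n r A)"
    unfolding is_op_def marginal_product_def tensor_op_def by auto
  moreover have "hermitian (marginal_product n r A)"
    using d unfolding density_iff marginal_product_def by (simp add: hermitian_tensor_op hermitian_ptrace_on)
  moreover have "(\<Sum>x\<in>Pow ?U. marginal_product n r A x x) = 1"
    using trace_tensor_op[of ?U A] trace_ptrace_on_density[OF d] A
    unfolding marginal_product_def by simp
  ultimately show ?thesis unfolding density_iff by blast
qed

lemma ptrace_on_marginal_product: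
  assumes d: "density n r" and A: "A \<subseteq> qubits n" and S: "S \<subseteq> qubits n"
    and SA: "S \<subseteq> A \<or> S \<inter> A = {}"
  shows "ptrace_on (qubits n) (marginal_product n r A) S = ptrace_on (qubits n) r S"
proof (intro ext)
  fix x y
  let ?U = "qubits n"
  show "ptrace_on ?U (marginal_product n r A) S x y = ptrace_on ?U r S x y"
  proof (cases "x \<subseteq> S \<and> y \<subseteq> S")
    case True
    note pt = ptrace_on_tensor_op[of ?U A S x y "ptrace_on ?U r A" "ptrace_on ?U r (?U - A)"]
    have empty: "ptrace_on T (ptrace_on ?U r T) {} {} {} = 1" if "T \<subseteq> ?U" for T
      using trace_ptrace_on_density[OF d that] by (simp add: ptrace_on_def)
    show ?thesis
    proof (cases "S \<subseteq> A")
      case True': True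
      have e: "S \<inter> A = S" "x \<inter> A = x" "y \<inter> A = y" "S - A = {}" "x - A = {}" "y - A = {}"
        using True True' by auto
      show ?thesis
        using pt True A S empty[of "?U - A"] ptrace_on_ptrace_on[of ?U S A r] True'
        unfolding marginal_product_def e by simp
    next
      case False
      then have e: "S \<inter> A = {}" "x \<inter> A = {}" "y \<inter> A = {}" "S - A = S" "x - A = x" "y - A = y"
        using True SA by auto
      have "S \<subseteq> ?U - A" using e(1) S by blast
      then show ?thesis
        using pt True A S empty[OF A] ptrace_on_ptrace_on[of ?U S "?U - A" r]
        unfolding marginal_product_def e by simp
    qed
  qed (simp add: ptrace_on_outside)
qed

lemma marginal_product_in_compat:
  assumes d: "density n r" and SS: "SS \<subseteq> Pow (qubits n)" and A: "A \<subseteq> qubits n"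
    and split: "\<forall>S\<in>SS. S \<subseteq> A \<or> S \<inter> A = {}"
  shows "marginal_product n r A \<in> compat n r SS"
  unfolding compat_def ptrace_eq_ptrace_on
proof (intro CollectI conjI ballI)
  show "density n (marginal_product n r A)" using density_marginal_product[OF d A] .
  fix S assume "S \<in> SS"
  then show "ptrace_on (qubits n) (marginal_product n r A) S = ptrace_on (qubits n) r S"
    using SS split by (intro ptrace_on_marginal_product[OF d A]) auto
qed

lemma biseparable_marginal_product:
  assumes d: "density n r" and A: "A \<noteq> {}" "A \<subseteq> qubits n" "A \<noteq> qubits n"
  shows "biseparable n (marginal_product n r A)"
proof -
  let ?U = "qubits n"
  obtain k and f :: "nat \<Rightarrow> nat set \<Rightarrow> complex" where "gram_on (Pow ?U) r {..<k} f"
    using density_gram[OF d] .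
  note g = gram_on_marginal_product[OF this A(2)]
  have pb: "proper_bipart n A" unfolding proper_bipart_def using A by auto
  have ds: "density n (marginal_product n r A)" using density_marginal_product[OF d A(2)] .
  show ?thesis unfolding biseparable_def
  proof (rule convex_pure_of_gram[OF _ g])
    show "is_op ?U (marginal_product n r A)" "(\<Sum>x\<in>Pow ?U. marginal_product n r A x x) = 1"
      using ds unfolding density_iff by auto
    have fac: "ket {} x = ket {} (x \<inter> A) * ket {} (x - A)" for x :: "nat set"
      by (auto simp: ket_def)
    show "pure_bisep n (ket {})"
      using pb unit_vec_ket_empty[of ?U] product_wrt_of_factorization[OF unit_vec_ket_empty A(2) fac]
      unfolding pure_bisep_def by auto
    show "is_vec ?U (ket {})" by (simp add: is_vec_def ket_def)
  next
    fix j
    let ?g = "\<lambda>x. f (fst (fst j)) (x \<inter> A \<union> snd (fst j)) * f (fst (snd j)) ((x - A) \<union> snd (snd j))"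
    assume "sqnorm ?U ?g > 0"
    then have un: "unit_vec ?U (normalize_vec ?U ?g)" using unit_vec_normalize_vec by simp
    have fac: "normalize_vec ?U ?g x = (\<lambda>a. f (fst (fst j)) (a \<union> snd (fst j)) / complex_of_real (sqrt (sqnorm ?U ?g))) (x \<inter> A)
        * (\<lambda>b. f (fst (snd j)) (b \<union> snd (snd j))) (x - A)" if "x \<subseteq> ?U" for x
      using that by (simp add: normalize_vec_def)
    show "pure_bisep n (normalize_vec ?U ?g)"
      using un pb product_wrt_of_factorization[OF un A(2) fac] unfolding pure_bisep_def by blast
  qed simp
qed

section \<open>Permutation symmetry of qubits\<close>

lemma swap_lbl_eq_image: "swap_lbl i j x = Transposition.transpose i j ` x"
  by (simp add: swap_lbl_def Transposition.transpose_def)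

lemma swap_lbl_swap_lbl [simp]: "swap_lbl i j (swap_lbl i j x) = x"
  by (simp add: swap_lbl_eq_image image_image)

lemma swap_lbl_commute: "swap_lbl i j = swap_lbl j i"
  by (intro ext) (simp add: swap_lbl_eq_image transpose_commute)

lemma swap_lbl_Un: "swap_lbl i j (x \<union> y) = swap_lbl i j x \<union> swap_lbl i j y"
  by (simp add: swap_lbl_eq_image image_Un)

lemma swap_lbl_Diff: "swap_lbl i j (x - y) = swap_lbl i j x - swap_lbl i j y"
  by (simp add: swap_lbl_eq_image image_set_diff inj_transpose)

lemma swap_lbl_fixed: "i \<notin> z \<Longrightarrow> j \<notin> z \<Longrightarrow> swap_lbl i j z = z"
  by (simp add: swap_lbl_eq_image)

lemma swap_lbl_self: "i \<in> V \<Longrightarrow> j \<in> V \<Longrightarrow> swap_lbl i j V = V"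
  by (simp add: swap_lbl_eq_image)

lemma swap_lbl_subset_swap_lbl_iff: "swap_lbl i j x \<subseteq> swap_lbl i j y \<longleftrightarrow> x \<subseteq> y"
  by (simp add: swap_lbl_eq_image inj_image_subset_iff inj_transpose)

lemma swap_lbl_subset_iff: "i \<in> V \<Longrightarrow> j \<in> V \<Longrightarrow> swap_lbl i j x \<subseteq> V \<longleftrightarrow> x \<subseteq> V"
  by (metis swap_lbl_self swap_lbl_subset_swap_lbl_iff)

lemma swap_lbl_singleton: "swap_lbl i j {i} = {j}"
  by (simp add: swap_lbl_eq_image)

lemma swap_lbl_triple:
  "i \<noteq> j \<Longrightarrow> j \<noteq> k \<Longrightarrow> i \<noteq> k \<Longrightarrow> swap_lbl i j x = swap_lbl i k (swap_lbl k j (swap_lbl i k x))"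
  by (simp add: swap_lbl_eq_image image_image transpose_triple)

lemma sum_Pow_swap_lbl:
  assumes "i \<in> V" "j \<in> V"
  shows "(\<Sum>w\<in>Pow V. f (swap_lbl i j w)) = (\<Sum>w\<in>Pow V. f w)"
  by (rule sum.reindex_bij_witness[where i = "swap_lbl i j" and j = "swap_lbl i j"])
     (use assms swap_lbl_subset_iff in auto)

text \<open>Invariance of the row index only: this is what it means for the range of an operator
  to consist of vectors symmetric under the transposition of qubits i and j.\<close>

definition swap_invariant :: "(nat set \<Rightarrow> nat set \<Rightarrow> complex) \<Rightarrow> nat \<Rightarrow> nat \<Rightarrow> bool" where
  "swap_invariant s i j \<longleftrightarrow> (\<forall>x y. s (swap_lbl i j x) y = s x y)"

definition swap_symmetric :: "nat set \<Rightarrow> (nat set \<Rightarrow> nat set \<Rightarrow> complex) \<Rightarrow> bool" where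
  "swap_symmetric V s \<longleftrightarrow> (\<forall>i\<in>V. \<forall>j\<in>V. \<forall>x y. s (swap_lbl i j x) (swap_lbl i j y) = s x y)"

lemma swap_invariant_refl: "swap_invariant s i i"
  by (simp add: swap_invariant_def swap_lbl_eq_image)

lemma swap_invariant_sym: "swap_invariant s i j \<Longrightarrow> swap_invariant s j i"
  by (simp add: swap_invariant_def swap_lbl_commute)

lemma swap_invariant_trans:
  assumes "swap_invariant s i k" "swap_invariant s k j"
  shows "swap_invariant s i j"
proof (cases "i = j \<or> j = k \<or> i = k")
  case True
  then show ?thesis using assms swap_invariant_refl by auto
next
  case False
  then show ?thesis using assms unfolding swap_invariant_def by (metis swap_lbl_triple)
qed

lemma swap_invariant_right:
  "hermitian s \<Longrightarrow> swap_invariant s i j \<Longrightarrow> s x (swap_lbl i j y) = s x y"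
  unfolding hermitian_def swap_invariant_def by metis

lemma swap_invariant_both:
  "hermitian s \<Longrightarrow> swap_invariant s i j \<Longrightarrow> s (swap_lbl i j x) (swap_lbl i j y) = s x y"
  unfolding hermitian_def swap_invariant_def by metis

lemma swap_symmetric_of_swap_invariant:
  "hermitian s \<Longrightarrow> \<forall>i\<in>V. \<forall>j\<in>V. swap_invariant s i j \<Longrightarrow> swap_symmetric V s"
  unfolding swap_symmetric_def using swap_invariant_both by blast

lemma symmetric_state_swap_invariant:
  assumes "density n r" "symmetric_state n r" "i \<in> qubits n" "j \<in> qubits n"
  shows "swap_invariant r i j"
  unfolding swap_invariant_def
proof (intro allI)
  fix x y
  show "r (swap_lbl i j x) y = r x y"
  proof (cases "y \<subseteq> qubits n")
    case True
    then have "sym_vec n (apply_op n r (ket y))"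
      using assms(2) unfolding symmetric_state_def is_vec_def ket_def by auto
    moreover have "apply_op n r (ket y) z = r z y" for z
      using True by (simp add: apply_op_def sum_mult_ket)
    ultimately show ?thesis using assms(3,4) unfolding sym_vec_def by metis
  next
    case False
    then show ?thesis using assms(1) by (simp add: density_iff is_op_def)
  qed
qed

lemma ptrace_on_swap_invariant:
  assumes "swap_invariant r i j" "i \<in> S" "j \<in> S" "S \<subseteq> V"
  shows "ptrace_on V r S (swap_lbl i j x) y = ptrace_on V r S x y"
proof (cases "x \<subseteq> S \<and> y \<subseteq> S")
  case True
  have "swap_lbl i j x \<union> z = swap_lbl i j (x \<union> z)" if "z \<in> Pow (V - S)" for z
  proof -
    have "i \<notin> z" "j \<notin> z" using that assms by auto
    then show ?thesis by (simp add: swap_lbl_Un swap_lbl_fixed)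
  qed
  then show ?thesis
    using True assms swap_lbl_subset_iff[of i S j x] by (simp add: ptrace_on_def swap_invariant_def)
next
  case False
  then show ?thesis using swap_lbl_subset_iff[of i S j x] assms by (auto simp: ptrace_on_outside)
qed

lemma ptrace_on_swap_lbl:
  assumes ij: "i \<in> V" "j \<in> V" and sy: "\<And>x y. s (swap_lbl i j x) (swap_lbl i j y) = s x y"
  shows "ptrace_on V s (swap_lbl i j T) (swap_lbl i j x) (swap_lbl i j y) = ptrace_on V s T x y"
proof (cases "x \<subseteq> T \<and> y \<subseteq> T")
  case True
  let ?P = "swap_lbl i j"
  have VT: "V - ?P T = ?P (V - T)" using swap_lbl_self[OF ij] by (simp add: swap_lbl_Diff)
  have "(\<Sum>z\<in>Pow (V - ?P T). s (?P x \<union> z) (?P y \<union> z)) = (\<Sum>z\<in>Pow (V - T). s (?P x \<union> ?P z) (?P y \<union> ?P z))"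
    unfolding VT
    by (rule sum.reindex_bij_witness[where i = "?P" and j = "?P"])
       (auto simp: swap_lbl_subset_swap_lbl_iff simp flip: swap_lbl_subset_swap_lbl_iff[of i j _ "?P _"])
  also have "\<dots> = (\<Sum>z\<in>Pow (V - T). s (x \<union> z) (y \<union> z))"
    by (simp add: swap_lbl_Un[symmetric] sy)
  finally show ?thesis using True by (simp add: ptrace_on_def swap_lbl_subset_swap_lbl_iff)
next
  case False
  then show ?thesis by (simp add: ptrace_on_outside swap_lbl_subset_swap_lbl_iff)
qed

lemma sum_swap_diag_eq_trace:
  assumes fin: "finite V" and S: "S \<subseteq> V" "i \<in> S" "j \<in> S"
    and inv: "\<And>x y. ptrace_on V s S (swap_lbl i j x) y = ptrace_on V s S x y"
  shows "(\<Sum>w\<in>Pow V. s (swap_lbl i j w) w) = (\<Sum>w\<in>Pow V. s w w)"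
proof -
  let ?P = "swap_lbl i j"
  have "(\<Sum>w\<in>Pow V. s (?P w) w) = (\<Sum>a\<in>Pow S. \<Sum>b\<in>Pow (V - S). s (?P (a \<union> b)) (a \<union> b))"
    by (rule sum_Pow_split[OF fin S(1)])
  also have "\<dots> = (\<Sum>a\<in>Pow S. ptrace_on V s S (?P a) a)"
  proof (rule sum.cong[OF refl])
    fix a assume a: "a \<in> Pow S"
    have "?P (a \<union> b) = ?P a \<union> b" if "b \<in> Pow (V - S)" for b
    proof -
      have "i \<notin> b" "j \<notin> b" using that S by auto
      then show ?thesis by (simp add: swap_lbl_Un swap_lbl_fixed)
    qed
    moreover have "?P a \<subseteq> S" using a swap_lbl_subset_iff S by blast
    ultimately show "(\<Sum>b\<in>Pow (V - S). s (?P (a \<union> b)) (a \<union> b)) = ptrace_on V s S (?P a) a"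
      using a by (simp add: ptrace_on_def)
  qed
  also have "\<dots> = (\<Sum>a\<in>Pow S. ptrace_on V s S a a)"
    using inv by simp
  also have "\<dots> = (\<Sum>w\<in>Pow V. s w w)"
    by (rule trace_ptrace_on[OF fin S(1)])
  finally show ?thesis .
qed

text \<open>By the hypothesis the values of the form of s at the vectors |w\<rangle> - |(i j) w\<rangle> sum to
  zero, and all of them are nonnegative.\<close>

lemma swap_antisymmetric_null:
  assumes fin: "finite V" and herm: "hermitian s" and psd: "psd_on (Pow V) s" and ij: "i \<in> V" "j \<in> V"
    and tr: "(\<Sum>w\<in>Pow V. s (swap_lbl i j w) w) = (\<Sum>w\<in>Pow V. s w w)" and w: "w \<in> Pow V"
  shows "qform (Pow V) s (\<lambda>x. ket w x + (-1) * ket (swap_lbl i j w) x) = 0"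
proof -
  let ?P = "swap_lbl i j"
  define u where "u w = (\<lambda>x. ket w x + (-1) * ket (?P w) x)" for w
  have "(\<Sum>w\<in>Pow V. s w (?P w)) = (\<Sum>w\<in>Pow V. cnj (s (?P w) w))"
    using herm unfolding hermitian_def by metis
  also have "\<dots> = cnj (\<Sum>w\<in>Pow V. s w w)"
    using tr by (simp flip: cnj_sum)
  also have "\<dots> = (\<Sum>w\<in>Pow V. s w w)"
    using hermitian_diag_real[OF herm] by simp
  finally have tr': "(\<Sum>w\<in>Pow V. s w (?P w)) = (\<Sum>w\<in>Pow V. s w w)" .
  have "(\<Sum>w\<in>Pow V. s (?P w) (?P w)) = (\<Sum>w\<in>Pow V. s w w)"
    using sum_Pow_swap_lbl[OF ij, of "\<lambda>w. s w w"] by simp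
  moreover have "qform (Pow V) s (u w) = s w w - s w (?P w) - s (?P w) w + s (?P w) (?P w)"
    if "w \<in> Pow V" for w
    unfolding u_def qform_add_scaled using fin that swap_lbl_subset_iff[OF ij] by (simp add: sform_ket_ket)
  ultimately have "(\<Sum>w\<in>Pow V. qform (Pow V) s (u w)) = 0"
    using tr tr' by (simp add: sum.distrib sum_subtractf)
  moreover have "Re (qform (Pow V) s (u w)) \<ge> 0" "Im (qform (Pow V) s (u w)) = 0" for w
    using psd unfolding psd_on_def by auto
  ultimately show ?thesis
    using w fin sum_nonneg_eq_0_iff[of "Pow V" "\<lambda>w. Re (qform (Pow V) s (u w))"]
    unfolding u_def by (simp add: complex_eq_iff flip: Re_sum)
qed

lemma swap_invariant_of_ptrace_eq:
  assumes fin: "finite V" and herm: "hermitian s" and psd: "psd_on (Pow V) s" and op: "is_op V s"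
    and S: "S \<subseteq> V" "i \<in> S" "j \<in> S" and inv: "swap_invariant r i j"
    and eq: "ptrace_on V s S = ptrace_on V r S"
  shows "swap_invariant s i j"
proof -
  let ?P = "swap_lbl i j"
  have ij: "i \<in> V" "j \<in> V" using S by auto
  have "(\<Sum>w\<in>Pow V. s (?P w) w) = (\<Sum>w\<in>Pow V. s w w)"
    by (rule sum_swap_diag_eq_trace[OF fin S]) (use eq ptrace_on_swap_invariant[OF inv S(2,3,1)] in metis)
  note null = swap_antisymmetric_null[OF fin herm psd ij this]
  have "s x (?P w) = s x w" for x w
  proof (cases "x \<in> Pow V \<and> w \<in> Pow V")
    case True
    then have PV: "?P w \<in> Pow V" using swap_lbl_subset_iff[OF ij] by blast
    have "sform (Pow V) s (ket x) (\<lambda>y. ket w y + (-1) * ket (?P w) y) = 0"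
      using psd_on_kernel[OF psd null] True by blast
    moreover have "sform (Pow V) s (ket x) (\<lambda>y. ket w y + (-1) * ket (?P w) y)
        = (\<Sum>y\<in>Pow V. s x y * ket w y - s x y * ket (?P w) y)"
      using True fin by (simp add: sform_ket_left right_diff_distrib)
    moreover have "\<dots> = s x w - s x (?P w)"
      using True fin PV by (simp only: sum_subtractf sum_mult_ket finite_Pow_iff)
    ultimately show ?thesis by simp
  next
    case False
    then have "\<not> (x \<subseteq> V \<and> ?P w \<subseteq> V)" "\<not> (x \<subseteq> V \<and> w \<subseteq> V)"
      using swap_lbl_subset_iff[OF ij] by auto
    then show ?thesis using op unfolding is_op_def by metis
  qed
  then show ?thesis
    unfolding swap_invariant_def using herm unfolding hermitian_def by metis
qed

lemma swap_lbl_out_in: "t \<in> T \<Longrightarrow> u \<notin> T \<Longrightarrow> swap_lbl t u T = insert u (T - {t})"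
  by (auto simp: swap_lbl_eq_image Transposition.transpose_def)

text \<open>Move T into S one qubit at a time by transpositions.\<close>

lemma ptrace_on_eq_of_card_le:
  assumes fin: "finite V" and sym: "swap_symmetric V s" "swap_symmetric V r"
    and S: "S \<subseteq> V" and eq: "ptrace_on V s S = ptrace_on V r S"
  shows "T \<subseteq> V \<Longrightarrow> card T \<le> card S \<Longrightarrow> ptrace_on V s T = ptrace_on V r T"
proof (induction "card (T - S)" arbitrary: T rule: less_induct)
  case less
  show ?case
  proof (cases "T \<subseteq> S")
    case True
    then show ?thesis using ptrace_on_eq_subset[OF fin True S eq] by simp
  next
    case False
    then obtain t where t: "t \<in> T" "t \<notin> S" by blast
    have finT: "finite S" "finite T" using fin S less.prems finite_subset by auto
    have "\<not> S \<subseteq> T"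
      using False less.prems(2) finT card_seteq by blast
    then obtain u where u: "u \<in> S" "u \<notin> T" by blast
    define T' where "T' = swap_lbl t u T"
    have T': "T' = insert u (T - {t})" unfolding T'_def using swap_lbl_out_in[OF t(1) u(2)] .
    have "T' - S = (T - S) - {t}" using T' u t by auto
    moreover have "card (T - S) > 0" using t finT by (auto simp: card_gt_0_iff)
    ultimately have "card (T' - S) < card (T - S)" using t finT by simp
    moreover have "card T' = card T"
      using T' t u finT by (simp add: card_insert_if) (metis card_gt_0_iff empty_iff Suc_pred)
    moreover have "T' \<subseteq> V" using T' less.prems S u by auto
    ultimately have IH: "ptrace_on V s T' = ptrace_on V r T'" using less.hyps less.prems by simp
    have tu: "t \<in> V" "u \<in> V" using t less.prems u S by auto
    show ?thesis
    proof (intro ext)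
      fix x y
      have "ptrace_on V s T x y = ptrace_on V s T' (swap_lbl t u x) (swap_lbl t u y)"
        unfolding T'_def by (rule ptrace_on_swap_lbl[symmetric]) (use tu sym in \<open>auto simp: swap_symmetric_def\<close>)
      also have "\<dots> = ptrace_on V r T' (swap_lbl t u x) (swap_lbl t u y)" using IH by simp
      also have "\<dots> = ptrace_on V r T x y"
        unfolding T'_def by (rule ptrace_on_swap_lbl) (use tu sym in \<open>auto simp: swap_symmetric_def\<close>)
      finally show "ptrace_on V s T x y = ptrace_on V r T x y" .
    qed
  qed
qed

section \<open>Connectivity of families of subsets\<close>

definition is_partition :: "'a set set \<Rightarrow> 'a set \<Rightarrow> bool" where
  "is_partition P U \<longleftrightarrow> \<Union>P = U \<and> (\<forall>B\<in>P. B \<noteq> {}) \<and> (\<forall>B\<in>P. \<forall>C\<in>P. B \<noteq> C \<longrightarrow> B \<inter> C = {})"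

lemma finite_partition: "is_partition P U \<Longrightarrow> finite U \<Longrightarrow> finite P"
  unfolding is_partition_def by (metis finite_UnionD)

lemma card_blocks_meeting_le:
  assumes P: "is_partition P U" and S: "finite S"
  shows "card {B\<in>P. B \<inter> S \<noteq> {}} \<le> card S"
proof -
  define blk where "blk s = (THE B. B \<in> P \<and> s \<in> B)" for s
  have "blk s = B" if "B \<in> P" "s \<in> B" for s B
    unfolding blk_def using that P unfolding is_partition_def by (intro the_equality) blast+
  then have "{B\<in>P. B \<inter> S \<noteq> {}} \<subseteq> blk ` S" by blast
  then have "card {B\<in>P. B \<inter> S \<noteq> {}} \<le> card (blk ` S)"
    using S by (intro card_mono) auto
  also have "\<dots> \<le> card S"
    by (rule card_image_le[OF S])
  finally show ?thesis .
qed

text \<open>Merging the blocks that meet S into a single block loses at most card S - 1 blocks.\<close>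

lemma partition_merge_blocks:
  assumes P: "is_partition P U" and U: "finite U" and S: "S \<subseteq> U" "S \<noteq> {}"
  obtains P' where "is_partition P' U" "card P \<le> card P' + (card S - 1)" "\<exists>B\<in>P'. S \<subseteq> B"
    "\<forall>B\<in>P. \<exists>B'\<in>P'. B \<subseteq> B'"
proof -
  have UP: "\<Union>P = U" and neP: "\<forall>B\<in>P. B \<noteq> {}"
    and disj: "\<And>B C s. B \<in> P \<Longrightarrow> C \<in> P \<Longrightarrow> s \<in> B \<Longrightarrow> s \<in> C \<Longrightarrow> B = C"
    using P unfolding is_partition_def by blast+
  have finP: "finite P" using finite_partition[OF P U] .
  define M where "M = {B\<in>P. B \<inter> S \<noteq> {}}"
  define P' where "P' = (P - M) \<union> {\<Union>M}"
  have MP: "M \<subseteq> P" unfolding M_def by blast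
  have SM: "S \<subseteq> \<Union>M" using S UP unfolding M_def by blast
  have Mne: "M \<noteq> {}" using SM S(2) by auto
  have UM_new: "\<Union>M \<notin> P - M" using SM S(2) unfolding M_def by blast
  have "card M \<le> card S"
    unfolding M_def using card_blocks_meeting_le[OF P] S(1) U finite_subset by blast
  moreover have "card M \<ge> 1"
    using finite_subset[OF MP finP] Mne by (simp add: Suc_le_eq card_gt_0_iff)
  moreover have "card P' = card P - card M + 1"
    unfolding P'_def using UM_new finP MP by (simp add: card_Diff_subset finite_subset)
  moreover have "card M \<le> card P" using finP MP card_mono by blast
  ultimately have card': "card P \<le> card P' + (card S - 1)" by linarith
  have disj_M: "C \<inter> \<Union>M = {}" if "C \<in> P - M" for C
  proof (rule ccontr)
    assume "C \<inter> \<Union>M \<noteq> {}"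
    then obtain x B where "x \<in> C" "x \<in> B" "B \<in> M" by blast
    then show False using disj[of C B x] that MP by blast
  qed
  have part': "is_partition P' U"
    unfolding is_partition_def
  proof (intro conjI ballI impI)
    show "\<Union>P' = U" unfolding P'_def using UP MP by auto
    show "B \<noteq> {}" if "B \<in> P'" for B using that neP SM S(2) unfolding P'_def by auto
    show "B \<inter> C = {}" if BC: "B \<in> P'" "C \<in> P'" "B \<noteq> C" for B C
    proof -
      consider "B = \<Union>M" "C \<in> P - M" | "C = \<Union>M" "B \<in> P - M" | "B \<in> P - M" "C \<in> P - M"
        using BC unfolding P'_def by auto
      then show ?thesis
      proof cases
        case 3
        then show ?thesis using P BC(3) unfolding is_partition_def by blast
      qed (use disj_M in auto)
    qed
  qed
  show ?thesis
  proof (rule that[OF part' card'])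
    show "\<exists>B\<in>P'. S \<subseteq> B" unfolding P'_def using SM by blast
    show "\<forall>B\<in>P. \<exists>B'\<in>P'. B \<subseteq> B'"
    proof
      fix B assume "B \<in> P"
      then show "\<exists>B'\<in>P'. B \<subseteq> B'" unfolding P'_def by (cases "B \<in> M") auto
    qed
  qed
qed

lemma partition_covering_family:
  assumes "finite U" "finite F" "\<forall>S\<in>F. S \<subseteq> U \<and> S \<noteq> {}"
  obtains P where "is_partition P U" "card U \<le> card P + (\<Sum>S\<in>F. card S - 1)" "\<forall>S\<in>F. \<exists>B\<in>P. S \<subseteq> B"
proof -
  have "\<exists>P. is_partition P U \<and> card U \<le> card P + (\<Sum>S\<in>F. card S - 1) \<and> (\<forall>S\<in>F. \<exists>B\<in>P. S \<subseteq> B)"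
    using assms(2,3)
  proof (induction F rule: finite_induct)
    case empty
    have "is_partition ((\<lambda>x. {x}) ` U) U" by (auto simp: is_partition_def)
    moreover have "card ((\<lambda>x. {x}) ` U) = card U" by (simp add: card_image inj_on_def)
    ultimately show ?case by (metis empty_iff le_refl add_0_right sum.empty)
  next
    case (insert S F)
    have "\<forall>S\<in>F. S \<subseteq> U \<and> S \<noteq> {}" using insert.prems by simp
    then obtain P where P: "is_partition P U" "card U \<le> card P + (\<Sum>S\<in>F. card S - 1)"
      "\<forall>S\<in>F. \<exists>B\<in>P. S \<subseteq> B"
      using insert.IH by blast
    have S: "S \<subseteq> U" "S \<noteq> {}" using insert.prems by auto
    obtain P' where P': "is_partition P' U" "card P \<le> card P' + (card S - 1)" "\<exists>B\<in>P'. S \<subseteq> B"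
      "\<forall>B\<in>P. \<exists>B'\<in>P'. B \<subseteq> B'"
      by (rule partition_merge_blocks[OF P(1) assms(1) S])
    have "\<exists>B\<in>P'. S' \<subseteq> B" if "S' \<in> insert S F" for S'
    proof (cases "S' = S")
      case False
      with that have "S' \<in> F" by simp
      then obtain B where B: "B \<in> P" "S' \<subseteq> B" using P(3) by blast
      then obtain B' where "B' \<in> P'" "B \<subseteq> B'" using P'(4) by blast
      with B(2) show ?thesis by blast
    qed (use P'(3) in simp)
    moreover have "card U \<le> card P' + (\<Sum>S\<in>insert S F. card S - 1)"
      using P(2) P'(2) insert.hyps by (simp add: sum.insert)
    ultimately show ?case using P'(1) by blast
  qed
  then show ?thesis using that by blast
qed

lemma separating_set_exists:
  assumes "finite U" "finite F" "\<forall>S\<in>F. S \<subseteq> U \<and> S \<noteq> {}"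
    and "(\<Sum>S\<in>F. card S - 1) + 1 < card U"
  obtains A where "A \<noteq> {}" "A \<subseteq> U" "A \<noteq> U" "\<forall>S\<in>F. S \<subseteq> A \<or> S \<inter> A = {}"
proof -
  obtain P where P: "is_partition P U" "card U \<le> card P + (\<Sum>S\<in>F. card S - 1)" "\<forall>S\<in>F. \<exists>B\<in>P. S \<subseteq> B"
    using partition_covering_family[OF assms(1-3)] .
  have "\<not> card P \<le> Suc 0" using P(2) assms(4) by linarith
  then have "\<not> (\<forall>B1\<in>P. \<forall>B2\<in>P. B1 = B2)"
    using card_le_Suc0_iff_eq[OF finite_partition[OF P(1) assms(1)]] by blast
  then obtain B1 B2 where B: "B1 \<in> P" "B2 \<in> P" "B1 \<noteq> B2" by blast
  have UP: "\<Union>P = U" and ne: "\<forall>B\<in>P. B \<noteq> {}"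
    and disj: "\<forall>B\<in>P. \<forall>C\<in>P. B \<noteq> C \<longrightarrow> B \<inter> C = {}"
    using P(1) unfolding is_partition_def by auto
  show ?thesis
  proof (rule that)
    show "B1 \<noteq> {}" "B1 \<subseteq> U" using B(1) ne UP by auto
    have "B2 \<inter> B1 = {}" "B2 \<noteq> {}" "B2 \<subseteq> U" using B ne UP disj by auto
    then show "B1 \<noteq> U" by blast
    show "\<forall>S\<in>F. S \<subseteq> B1 \<or> S \<inter> B1 = {}"
    proof
      fix S assume "S \<in> F"
      then obtain B where "B \<in> P" "S \<subseteq> B" using P(3) by blast
      then show "S \<subseteq> B1 \<or> S \<inter> B1 = {}" using B(1) disj by (cases "B = B1") auto
    qed
  qed
qed

text \<open>Windows of L consecutive qubits, each overlapping the previous one in one qubit; the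
  start is capped so that every window stays inside 1..n.\<close>

definition chain_start :: "nat \<Rightarrow> nat \<Rightarrow> nat \<Rightarrow> nat" where
  "chain_start n L t = min (t * (L - 1)) (n - L)"

definition chain_block :: "nat \<Rightarrow> nat \<Rightarrow> nat \<Rightarrow> nat set" where
  "chain_block n L t = {chain_start n L t + 1 .. chain_start n L t + L}"

lemma chain_block_subset: "L \<le> n \<Longrightarrow> chain_block n L t \<subseteq> qubits n"
  by (auto simp: chain_block_def qubits_def chain_start_def)

lemma card_chain_block: "card (chain_block n L t) = L"
  by (simp add: chain_block_def)

lemma chain_blocks_connect:
  assumes L: "2 \<le> L" "L \<le> n" and c: "n - 1 \<le> c * (L - 1)" "1 \<le> c"
    and R_sym: "\<And>i j. R i j \<Longrightarrow> R j i"
    and R_trans: "\<And>i j k. R i k \<Longrightarrow> R k j \<Longrightarrow> R i j"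
    and R_block: "\<And>t i j. t < c \<Longrightarrow> i \<in> chain_block n L t \<Longrightarrow> j \<in> chain_block n L t \<Longrightarrow> R i j"
    and i: "i \<in> qubits n"
  shows "R i 1"
proof -
  have step: "t < c \<Longrightarrow> \<forall>i. 1 \<le> i \<and> i \<le> chain_start n L t + L \<longrightarrow> R i 1" for t
  proof (induction t)
    case 0
    then show ?case using R_block[of 0] by (auto simp: chain_block_def chain_start_def)
  next
    case (Suc t)
    have IH: "\<forall>i. 1 \<le> i \<and> i \<le> chain_start n L t + L \<longrightarrow> R i 1" using Suc by simp
    have m: "chain_start n L (Suc t) \<le> chain_start n L t + L - 1" "chain_start n L t \<le> chain_start n L (Suc t)"
      using L by (auto simp: chain_start_def algebra_simps)
    show ?case
    proof (intro allI impI)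
      fix i assume i: "1 \<le> i \<and> i \<le> chain_start n L (Suc t) + L"
      show "R i 1"
      proof (cases "i \<le> chain_start n L t + L")
        case True
        then show ?thesis using IH i by blast
      next
        case False
        define j where "j = chain_start n L (Suc t) + 1"
        have "i \<in> chain_block n L (Suc t)" "j \<in> chain_block n L (Suc t)"
          using i False m L unfolding chain_block_def j_def by auto
        then have "R i j" using R_block Suc.prems by blast
        moreover have "R j 1" using IH m L unfolding j_def by auto
        ultimately show ?thesis using R_trans by blast
      qed
    qed
  qed
  have "n \<le> chain_start n L (c - 1) + L"
  proof -
    obtain c' L' where "c = Suc c'" "L = Suc L'" using c L by (cases c; cases L) auto
    then have "(c - 1) * (L - 1) + L = c * (L - 1) + 1" by simp
    then show ?thesis using c L unfolding chain_start_def by auto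
  qed
  then show ?thesis using step[of "c - 1"] c i by (auto simp: qubits_def)
qed

lemma nat_ceiling_divide:
  fixes a b :: nat
  assumes "a \<ge> 1" "b \<ge> 1"
  shows "a \<le> nat \<lceil>real a / real b\<rceil> * b" "1 \<le> nat \<lceil>real a / real b\<rceil>"
    "\<And>c. a \<le> c * b \<Longrightarrow> nat \<lceil>real a / real b\<rceil> \<le> c"
proof -
  have b: "real b > 0" using assms by simp
  have pos: "\<lceil>real a / real b\<rceil> \<ge> 1" using assms by simp
  have "real a \<le> of_int \<lceil>real a / real b\<rceil> * real b"
    using pos_divide_le_eq[OF b] le_of_int_ceiling by blast
  then have "real a \<le> real (nat \<lceil>real a / real b\<rceil>) * real b" using pos by simp
  then show "a \<le> nat \<lceil>real a / real b\<rceil> * b" by (metis of_nat_le_iff of_nat_mult)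
  show "1 \<le> nat \<lceil>real a / real b\<rceil>" using pos by linarith
  fix c assume "a \<le> c * b"
  then have "real a / real b \<le> real c" using b by (simp add: divide_le_eq flip: of_nat_mult)
  then show "nat \<lceil>real a / real b\<rceil> \<le> c" by (simp add: ceiling_le_iff nat_le_iff)
qed

section \<open>Symmetric product states are pure and fully separable\<close>

definition factorizable :: "nat set \<Rightarrow> (nat set \<Rightarrow> complex) \<Rightarrow> bool" where
  "factorizable U \<Psi> \<longleftrightarrow> (\<forall>S\<subseteq>U. \<exists>g h. \<forall>x\<subseteq>U. \<Psi> x = g (x \<inter> S) * h (x - S))"

lemma pure_fullsep_iff_factorizable:
  "pure_fullsep n \<Phi> \<longleftrightarrow> unit_vec (qubits n) \<Phi> \<and> factorizable (qubits n) \<Phi>"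
proof
  assume pf: "pure_fullsep n \<Phi>"
  have "\<exists>g h. \<forall>x\<subseteq>qubits n. \<Phi> x = g (x \<inter> S) * h (x - S)" if S: "S \<subseteq> qubits n" for S
  proof (cases "S = {} \<or> S = qubits n")
    case True
    then show ?thesis
    proof
      assume "S = {}"
      then show ?thesis by (intro exI[of _ "\<lambda>_. 1"] exI[of _ \<Phi>]) simp
    next
      assume "S = qubits n"
      then show ?thesis by (intro exI[of _ \<Phi>] exI[of _ "\<lambda>_. 1"]) (simp add: Int_absorb2)
    qed
  next
    case False
    then have "product_wrt n S \<Phi>"
      using pf S unfolding pure_fullsep_def proper_bipart_def by blast
    then show ?thesis unfolding product_wrt_def by blast
  qed
  then show "unit_vec (qubits n) \<Phi> \<and> factorizable (qubits n) \<Phi>"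
    using pf unfolding pure_fullsep_def factorizable_def by blast
next
  assume "unit_vec (qubits n) \<Phi> \<and> factorizable (qubits n) \<Phi>"
  then show "pure_fullsep n \<Phi>"
    unfolding pure_fullsep_def factorizable_def proper_bipart_def
    using product_wrt_of_factorization by (metis psubset_imp_subset)
qed

lemma factorizable_scaled:
  assumes "factorizable U \<Phi>" "\<And>x. x \<subseteq> U \<Longrightarrow> \<psi> x = c * \<Phi> x"
  shows "factorizable U \<psi>"
  unfolding factorizable_def
proof (intro allI impI)
  fix S assume "S \<subseteq> U"
  then obtain g h where "\<forall>x\<subseteq>U. \<Phi> x = g (x \<inter> S) * h (x - S)"
    using assms(1) unfolding factorizable_def by blast
  then have "\<forall>x\<subseteq>U. \<psi> x = (\<lambda>a. c * g a) (x \<inter> S) * h (x - S)" using assms(2) by simp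
  then show "\<exists>g h. \<forall>x\<subseteq>U. \<psi> x = g (x \<inter> S) * h (x - S)"
    by (rule exI[where x = "\<lambda>a. c * g a", OF exI[where x = h]])
qed

lemma factorizable_power_card:
  assumes "finite U"
  shows "factorizable U (\<lambda>x. if x \<subseteq> U then q ^ card x else 0)"
  unfolding factorizable_def
proof (intro allI impI)
  fix S
  have "q ^ card x = q ^ card (x \<inter> S) * q ^ card (x - S)" if "x \<subseteq> U" for x
  proof -
    have "finite x" using that assms finite_subset by blast
    moreover have "x = (x \<inter> S) \<union> (x - S)" by blast
    ultimately have "card x = card (x \<inter> S) + card (x - S)"
      by (metis card_Un_disjoint finite_Diff finite_Int Int_Diff_disjoint)
    then show ?thesis by (simp add: power_add)
  qed
  then have "\<forall>x\<subseteq>U. (if x \<subseteq> U then q ^ card x else 0) = (\<lambda>a. q ^ card a) (x \<inter> S) * (\<lambda>a. q ^ card a) (x - S)"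
    by simp
  then show "\<exists>g h. \<forall>x\<subseteq>U. (if x \<subseteq> U then q ^ card x else 0) = g (x \<inter> S) * h (x - S)"
    by (rule exI[where x = "\<lambda>a. q ^ card a", OF exI[where x = "\<lambda>a. q ^ card a"]])
qed

lemma factorizable_ket:
  assumes z: "z \<subseteq> U"
  shows "factorizable U (ket z)"
  unfolding factorizable_def
proof (intro allI impI)
  fix S assume S: "S \<subseteq> U"
  have "ket z x = ket (z \<inter> S) (x \<inter> S) * ket (z - S) (x - S)" if "x \<subseteq> U" for x
  proof -
    have "x = z \<longleftrightarrow> x \<inter> S = z \<inter> S \<and> x - S = z - S" using that z by blast
    then show ?thesis unfolding ket_def by simp
  qed
  then have "\<forall>x\<subseteq>U. ket z x = ket (z \<inter> S) (x \<inter> S) * ket (z - S) (x - S)" by blast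
  then show "\<exists>g h. \<forall>x\<subseteq>U. ket z x = g (x \<inter> S) * h (x - S)"
    by (rule exI[where x = "ket (z \<inter> S)", OF exI[where x = "ket (z - S)"]])
qed

lemma pure_fullsep_of_rank_one:
  assumes d: "density n r" and v: "is_vec (qubits n) \<Psi>" and fa: "factorizable (qubits n) \<Psi>"
    and c: "c \<ge> 0"
    and form: "\<And>x y. x \<subseteq> qubits n \<Longrightarrow> y \<subseteq> qubits n \<Longrightarrow> r x y = complex_of_real c * \<Psi> x * cnj (\<Psi> y)"
  shows "\<exists>\<Phi>. pure_fullsep n \<Phi> \<and> r = proj \<Phi>"
proof -
  let ?U = "qubits n"
  define \<Phi> where "\<Phi> x = complex_of_real (sqrt c) * \<Psi> x" for x
  have "complex_of_real (sqrt c) * cnj (complex_of_real (sqrt c)) = complex_of_real c"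
    using c by (simp flip: of_real_mult)
  then have inside: "r x y = proj \<Phi> x y" if "x \<subseteq> ?U" "y \<subseteq> ?U" for x y
    unfolding proj_def \<Phi>_def using form[OF that] by (simp add: algebra_simps)
  have "is_op ?U r" using d unfolding density_iff by blast
  then have outside: "r x y = proj \<Phi> x y" if "\<not> (x \<subseteq> ?U \<and> y \<subseteq> ?U)" for x y
    using v that unfolding is_op_def is_vec_def proj_def \<Phi>_def by auto
  have r: "r = proj \<Phi>"
  proof (intro ext)
    show "r x y = proj \<Phi> x y" for x y
      by (cases "x \<subseteq> ?U \<and> y \<subseteq> ?U") (use inside outside in auto)
  qed
  have "proj \<Phi> x x = complex_of_real ((cmod (\<Phi> x))\<^sup>2)" for x
    unfolding proj_def by (metis complex_norm_square)
  then have "complex_of_real (\<Sum>x\<in>Pow ?U. (cmod (\<Phi> x))\<^sup>2) = 1"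
    using d unfolding r density_iff by simp
  moreover have "is_vec ?U \<Phi>" using v unfolding is_vec_def \<Phi>_def by simp
  ultimately have "unit_vec ?U \<Phi>" unfolding unit_vec_def by (metis of_real_eq_1_iff)
  moreover have "factorizable ?U \<Phi>"
    by (rule factorizable_scaled[OF fa, where c = "complex_of_real (sqrt c)"]) (simp add: \<Phi>_def)
  ultimately show ?thesis using r pure_fullsep_iff_factorizable by blast
qed

lemma sum_two_points:
  assumes "finite X" "a \<in> X" "b \<in> X" "a \<noteq> b" "\<And>x. x \<in> X \<Longrightarrow> x \<noteq> a \<Longrightarrow> x \<noteq> b \<Longrightarrow> h x = 0"
  shows "sum h X = h a + h b"
proof -
  have "sum h X = sum h {a, b}"
    by (rule sum.mono_neutral_right) (use assms in auto)
  then show ?thesis using assms(4) by simp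
qed

lemma qform_two_kets:
  assumes "finite X" "a \<in> X" "b \<in> X" "a \<noteq> b"
  shows "qform X r (\<lambda>x. c0 * ket a x + c1 * ket b x)
    = cnj c0 * c0 * r a a + cnj c0 * c1 * r a b + cnj c1 * c0 * r b a + cnj c1 * c1 * r b b"
proof -
  define g where "g x = c0 * ket a x + c1 * ket b x" for x
  have ga: "g a = c0" and gb: "g b = c1" and g0: "\<And>x. x \<noteq> a \<Longrightarrow> x \<noteq> b \<Longrightarrow> g x = 0"
    using assms(4) unfolding g_def ket_def by auto
  have "(\<Sum>y\<in>X. cnj (g x) * r x y * g y) = cnj (g x) * r x a * g a + cnj (g x) * r x b * g b" for x
    by (rule sum_two_points[OF assms]) (simp add: g0)
  then have "(\<Sum>y\<in>X. cnj (g x) * r x y * g y) = cnj (g x) * r x a * c0 + cnj (g x) * r x b * c1" for x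
    by (simp add: ga gb)
  then have "qform X r g = (\<Sum>x\<in>X. cnj (g x) * r x a * c0 + cnj (g x) * r x b * c1)"
    unfolding sform_def by simp
  also have "\<dots> = (cnj (g a) * r a a * c0 + cnj (g a) * r a b * c1) + (cnj (g b) * r b a * c0 + cnj (g b) * r b b * c1)"
    by (rule sum_two_points[OF assms]) (simp add: g0)
  finally show ?thesis unfolding g_def[symmetric] ga gb by (simp add: algebra_simps)
qed

text \<open>Sum the quadratic form of r at c0|w\<rangle> + c1|w + i\<rangle> over all w: this is the marginal's form,
  so each summand vanishes and the Gram vectors of r see the kernel vector.\<close>

lemma gram_vectors_kernel_relation:
  fixes f :: "nat \<Rightarrow> nat set \<Rightarrow> complex"
  assumes d: "density n r" and f: "gram_on (Pow (qubits n)) r {..<k} f" and i: "i \<in> qubits n"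
    and ker: "qform (Pow {i}) (ptrace_on (qubits n) r {i}) (\<lambda>x. c0 * ket {} x + c1 * ket {i} x) = 0"
    and w: "w \<subseteq> qubits n - {i}" and j: "j < k"
  shows "cnj (f j w) * c0 + cnj (f j (insert i w)) * c1 = 0"
proof -
  let ?U = "qubits n"
  define g where "g w = (\<lambda>x. c0 * ket w x + c1 * ket (insert i w) x)" for w
  define Q where "Q w = qform (Pow ?U) r (g w)" for w
  have iw: "w \<noteq> insert i w" "w \<in> Pow ?U" "insert i w \<in> Pow ?U" if "w \<subseteq> ?U - {i}" for w
    using i that by auto
  have pt: "ptrace_on ?U r {i} x y = (\<Sum>w\<in>Pow (?U - {i}). r (x \<union> w) (y \<union> w))"
    if "x \<subseteq> {i}" "y \<subseteq> {i}" for x y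
    using that by (simp add: ptrace_on_def)
  have "(\<Sum>w\<in>Pow (?U - {i}). Q w) = (\<Sum>w\<in>Pow (?U - {i}).
      cnj c0 * c0 * r ({} \<union> w) ({} \<union> w) + cnj c0 * c1 * r ({} \<union> w) ({i} \<union> w)
      + cnj c1 * c0 * r ({i} \<union> w) ({} \<union> w) + cnj c1 * c1 * r ({i} \<union> w) ({i} \<union> w))"
    unfolding Q_def g_def using iw by (intro sum.cong refl) (simp add: qform_two_kets)
  also have "\<dots> = cnj c0 * c0 * ptrace_on ?U r {i} {} {} + cnj c0 * c1 * ptrace_on ?U r {i} {} {i}
      + cnj c1 * c0 * ptrace_on ?U r {i} {i} {} + cnj c1 * c1 * ptrace_on ?U r {i} {i} {i}"
    by (simp add: pt sum.distrib sum_distrib_left)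
  also have "\<dots> = qform (Pow {i}) (ptrace_on ?U r {i}) (\<lambda>x. c0 * ket {} x + c1 * ket {i} x)"
    by (rule qform_two_kets[symmetric]) auto
  finally have "(\<Sum>w\<in>Pow (?U - {i}). Q w) = 0" using ker by simp
  moreover have "Re (Q w) \<ge> 0" "Im (Q w) = 0" for w
    using d unfolding Q_def density_iff psd_on_def by auto
  ultimately have "Q w = 0"
    using w sum_nonneg_eq_0_iff[of "Pow (?U - {i})" "\<lambda>w. Re (Q w)"]
    by (simp add: complex_eq_iff flip: Re_sum)
  then have "(\<Sum>y\<in>Pow ?U. cnj (f j y) * g w y) = 0"
    using gram_on_qform_zero[OF f] j unfolding Q_def by simp
  moreover have "(\<Sum>y\<in>Pow ?U. cnj (f j y) * g w y) = cnj (f j w) * g w w + cnj (f j (insert i w)) * g w (insert i w)"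
    by (rule sum_two_points) (use iw[OF w] in \<open>auto simp: g_def ket_def\<close>)
  moreover have "g w w = c0" "g w (insert i w) = c1"
    using iw[OF w] unfolding g_def ket_def by auto
  ultimately show ?thesis by simp
qed

lemma power_card_of_insert_step:
  fixes F :: "'a set \<Rightarrow> complex"
  assumes "finite U" and step: "\<And>i w. i \<in> U \<Longrightarrow> w \<subseteq> U - {i} \<Longrightarrow> F (insert i w) = q * F w"
    and "x \<subseteq> U"
  shows "F x = q ^ card x * F {}"
proof -
  have "finite x" using assms(1,3) finite_subset by blast
  then show ?thesis using assms(3)
  proof (induction x rule: finite_induct)
    case (insert i w)
    have "F (insert i w) = q * F w" using insert.hyps(2) insert.prems by (intro step) auto
    moreover have "F w = q ^ card w * F {}" using insert.prems by (intro insert.IH) simp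
    ultimately show ?case using insert.hyps by simp
  qed simp
qed

lemma gram_geometric_imp_pure_fullsep:
  fixes f :: "nat \<Rightarrow> nat set \<Rightarrow> complex"
  assumes d: "density n r" and f: "gram_on (Pow (qubits n)) r {..<k} f"
    and step: "\<And>j i w. j < k \<Longrightarrow> i \<in> qubits n \<Longrightarrow> w \<subseteq> qubits n - {i} \<Longrightarrow> f j (insert i w) = q * f j w"
  shows "\<exists>\<Phi>. pure_fullsep n \<Phi> \<and> r = proj \<Phi>"
proof -
  let ?U = "qubits n"
  define \<Psi> where "\<Psi> x = (if x \<subseteq> ?U then q ^ card x else 0)" for x
  define c where "c = (\<Sum>j<k. (cmod (f j {}))\<^sup>2)"
  have form: "r x y = complex_of_real c * \<Psi> x * cnj (\<Psi> y)" if x: "x \<subseteq> ?U" and y: "y \<subseteq> ?U" for x y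
  proof -
    have "f j x * cnj (f j y) = (q ^ card x * cnj (q ^ card y)) * (cnj (f j {}) * f j {})" if "j < k" for j
      using power_card_of_insert_step[OF finite_qubits step[OF that] x]
        power_card_of_insert_step[OF finite_qubits step[OF that] y]
      by (simp only: complex_cnj_mult ac_simps)
    then have "r x y = (\<Sum>j<k. (q ^ card x * cnj (q ^ card y)) * (cnj (f j {}) * f j {}))"
      using f x y unfolding gram_on_def by simp
    also have "\<dots> = (q ^ card x * cnj (q ^ card y)) * complex_of_real c"
      unfolding c_def by (simp only: sum_distrib_left[symmetric] cnj_mult_self of_real_sum)
    finally show ?thesis unfolding \<Psi>_def using x y by simp
  qed
  have "c \<ge> 0" unfolding c_def by (simp add: sum_nonneg)
  moreover have "is_vec ?U \<Psi>" unfolding is_vec_def \<Psi>_def by simp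
  moreover have "factorizable ?U \<Psi>" unfolding \<Psi>_def by (rule factorizable_power_card) simp
  ultimately show ?thesis using pure_fullsep_of_rank_one[OF d _ _ _ form] by blast
qed

lemma gram_top_support_imp_pure_fullsep:
  fixes f :: "nat \<Rightarrow> nat set \<Rightarrow> complex"
  assumes d: "density n r" and f: "gram_on (Pow (qubits n)) r {..<k} f"
    and zero: "\<And>j x. j < k \<Longrightarrow> x \<subseteq> qubits n \<Longrightarrow> x \<noteq> qubits n \<Longrightarrow> f j x = 0"
  shows "\<exists>\<Phi>. pure_fullsep n \<Phi> \<and> r = proj \<Phi>"
proof -
  let ?U = "qubits n"
  define c where "c = (\<Sum>j<k. (cmod (f j ?U))\<^sup>2)"
  have "r x y = complex_of_real c * ket ?U x * cnj (ket ?U y)" if "x \<subseteq> ?U" "y \<subseteq> ?U" for x y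
  proof (cases "x = ?U \<and> y = ?U")
    case True
    have "r x y = (\<Sum>j<k. cnj (f j ?U) * f j ?U)"
      using f True unfolding gram_on_def by (simp add: mult.commute)
    also have "\<dots> = complex_of_real c"
      unfolding c_def by (simp only: cnj_mult_self of_real_sum)
    finally show ?thesis using True by (simp add: ket_def)
  next
    case False
    then have "f j x * cnj (f j y) = 0" if "j < k" for j
      using zero that \<open>x \<subseteq> ?U\<close> \<open>y \<subseteq> ?U\<close> by auto
    then have "(\<Sum>j<k. f j x * cnj (f j y)) = 0" by (intro sum.neutral) simp
    then have "r x y = 0" using f that unfolding gram_on_def by simp
    then show ?thesis using False by (auto simp: ket_def)
  qed
  moreover have "c \<ge> 0" unfolding c_def by (simp add: sum_nonneg)
  moreover have "is_vec ?U (ket ?U)" unfolding is_vec_def ket_def by simp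
  ultimately show ?thesis using pure_fullsep_of_rank_one[OF d _ factorizable_ket[OF order_refl]] by blast
qed

text \<open>The Gram vectors of r are either geometric in the number of excited qubits (c1 \<noteq> 0)
  or supported on the all-one label (c1 = 0).\<close>

lemma pure_fullsep_of_common_qubit_kernel:
  assumes d: "density n r" and c: "c0 \<noteq> 0 \<or> c1 \<noteq> 0"
    and ker: "\<And>i. i \<in> qubits n \<Longrightarrow>
      qform (Pow {i}) (ptrace_on (qubits n) r {i}) (\<lambda>x. c0 * ket {} x + c1 * ket {i} x) = 0"
  shows "\<exists>\<Phi>. pure_fullsep n \<Phi> \<and> r = proj \<Phi>"
proof -
  let ?U = "qubits n"
  obtain k and f :: "nat \<Rightarrow> nat set \<Rightarrow> complex" where f: "gram_on (Pow ?U) r {..<k} f"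
    using density_gram[OF d] .
  have rel: "cnj (f j w) * c0 + cnj (f j (insert i w)) * c1 = 0"
    if "j < k" "i \<in> ?U" "w \<subseteq> ?U - {i}" for j i w
    using gram_vectors_kernel_relation[OF d f that(2) ker[OF that(2)] that(3,1)] .
  show ?thesis
  proof (cases "c1 = 0")
    case False
    show ?thesis
    proof (rule gram_geometric_imp_pure_fullsep[OF d f])
      fix j i w assume "j < k" "i \<in> ?U" "w \<subseteq> ?U - {i}"
      then have "cnj (cnj (f j w) * c0 + cnj (f j (insert i w)) * c1) = 0" using rel by simp
      then show "f j (insert i w) = - cnj c0 / cnj c1 * f j w"
        using False by (simp add: field_simps add_eq_0_iff)
    qed
  next
    case True
    show ?thesis
    proof (rule gram_top_support_imp_pure_fullsep[OF d f])
      fix j x assume "j < k" "x \<subseteq> ?U" "x \<noteq> ?U"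
      then obtain i where "i \<in> ?U" "x \<subseteq> ?U - {i}" by blast
      then show "f j x = 0" using rel[OF \<open>j < k\<close>] True c by simp
    qed
  qed
qed

lemma qubit_kernel_vector:
  fixes \<alpha> \<beta> \<gamma> :: complex
  assumes "cnj \<alpha> = \<alpha>" "cnj \<beta> * \<beta> = \<gamma> * \<alpha>"
  obtains c0 c1 where "c0 \<noteq> 0 \<or> c1 \<noteq> 0"
    "cnj c0 * c0 * \<alpha> + cnj c0 * c1 * cnj \<beta> + cnj c1 * c0 * \<beta> + cnj c1 * c1 * \<gamma> = 0"
proof (cases "\<alpha> = 0")
  case True
  then have "\<beta> = 0" using assms(2) by (simp add: mult.commute)
  then show ?thesis using True that[of 1 0] by simp
next
  case False
  have "cnj (cnj \<beta>) * cnj \<beta> * \<alpha> + cnj (cnj \<beta>) * (- \<alpha>) * cnj \<beta> + cnj (- \<alpha>) * cnj \<beta> * \<beta> + cnj (- \<alpha>) * (- \<alpha>) * \<gamma>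
      = \<alpha> * (\<gamma> * \<alpha> - cnj \<beta> * \<beta>)"
    using assms(1) by (simp add: algebra_simps)
  then show ?thesis using False assms(2) that[of "cnj \<beta>" "- \<alpha>"] by simp
qed

lemma swap_symmetric_qubit_marginal:
  assumes sym: "swap_symmetric (qubits n) r" and a: "a \<in> qubits n" and i: "i \<in> qubits n"
    and x: "x \<subseteq> {a}" and y: "y \<subseteq> {a}"
  shows "ptrace_on (qubits n) r {i} (swap_lbl a i x) (swap_lbl a i y) = ptrace_on (qubits n) r {a} x y"
  using ptrace_on_swap_lbl[OF a i, of r "{a}" x y] sym a i unfolding swap_symmetric_def swap_lbl_singleton
  by blast

text \<open>On two qubits a \<in> A and b \<notin> A a product state restricts to a product of one-qubit states,
  and invariance under exchanging a and b makes the one-qubit state singular.\<close>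

lemma product_marginal_singular:
  assumes d: "density n r" and inv: "swap_invariant r a b"
    and a: "a \<in> A" and b: "b \<in> qubits n" "b \<notin> A" and A: "A \<subseteq> qubits n"
    and eq: "r = marginal_product n r A"
  shows "ptrace_on (qubits n) r {a} {} {a} * ptrace_on (qubits n) r {b} {b} {}
    = ptrace_on (qubits n) r {a} {a} {a} * ptrace_on (qubits n) r {b} {} {}"
proof -
  let ?U = "qubits n"
  have ab: "{a, b} \<subseteq> ?U" "{a, b} \<inter> A = {a}" "{a, b} - A = {b}" using a b A by auto
  have pt: "ptrace_on ?U r {a, b} x y = ptrace_on ?U r {a} (x \<inter> A) (y \<inter> A) * ptrace_on ?U r {b} (x - A) (y - A)"
    if "x \<subseteq> {a, b}" "y \<subseteq> {a, b}" for x y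
  proof -
    have "ptrace_on ?U r {a, b} x y = ptrace_on ?U (marginal_product n r A) {a, b} x y"
      using eq by simp
    also have "\<dots> = ptrace_on A (ptrace_on ?U r A) {a} (x \<inter> A) (y \<inter> A)
        * ptrace_on (?U - A) (ptrace_on ?U r (?U - A)) {b} (x - A) (y - A)"
      unfolding marginal_product_def using ptrace_on_tensor_op[OF _ A ab(1) that] ab by simp
    also have "\<dots> = ptrace_on ?U r {a} (x \<inter> A) (y \<inter> A) * ptrace_on ?U r {b} (x - A) (y - A)"
      using ptrace_on_ptrace_on[of ?U "{a}" A r] ptrace_on_ptrace_on[of ?U "{b}" "?U - A" r] a b A by simp
    finally show ?thesis .
  qed
  have "ptrace_on ?U r {a, b} (swap_lbl a b {a}) {a} = ptrace_on ?U r {a, b} {a} {a}"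
    by (rule ptrace_on_swap_invariant[OF inv]) (use ab in auto)
  then have "ptrace_on ?U r {a, b} {b} {a} = ptrace_on ?U r {a, b} {a} {a}"
    unfolding swap_lbl_singleton .
  moreover have "{b} \<inter> A = {}" "{a} \<inter> A = {a}" "{b} - A = {b}" "{a} - A = {}" using a b by auto
  ultimately show ?thesis using pt[of "{b}" "{a}"] pt[of "{a}" "{a}"] by (simp add: mult.commute)
qed

lemma symmetric_product_pure_fullsep:
  assumes d: "density n r" and inv: "\<forall>i\<in>qubits n. \<forall>j\<in>qubits n. swap_invariant r i j"
    and A: "A \<noteq> {}" "A \<subseteq> qubits n" "A \<noteq> qubits n" and eq: "r = marginal_product n r A"
  shows "\<exists>\<Phi>. pure_fullsep n \<Phi> \<and> r = proj \<Phi>"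
proof -
  let ?U = "qubits n"
  have herm: "hermitian r" using d unfolding density_iff by blast
  have sym: "swap_symmetric ?U r" using swap_symmetric_of_swap_invariant[OF herm inv] .
  obtain a where a: "a \<in> A" using A by blast
  obtain b where b: "b \<in> ?U" "b \<notin> A" using A by blast
  have aU: "a \<in> ?U" using a A by blast
  define \<alpha> \<beta> \<gamma> where "\<alpha> = ptrace_on ?U r {a} {} {}" and "\<beta> = ptrace_on ?U r {a} {a} {}"
    and "\<gamma> = ptrace_on ?U r {a} {a} {a}"
  have herm_a: "hermitian (ptrace_on ?U r {a})" by (rule hermitian_ptrace_on[OF herm])
  have \<alpha>: "cnj \<alpha> = \<alpha>" unfolding \<alpha>_def using hermitian_diag_real[OF herm_a] .
  have \<beta>': "ptrace_on ?U r {a} {} {a} = cnj \<beta>"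
    using herm_a unfolding \<beta>_def hermitian_def by blast
  have marg: "ptrace_on ?U r {i} {} {} = \<alpha>" "ptrace_on ?U r {i} {} {i} = cnj \<beta>"
    "ptrace_on ?U r {i} {i} {} = \<beta>" "ptrace_on ?U r {i} {i} {i} = \<gamma>" if "i \<in> ?U" for i
    using swap_symmetric_qubit_marginal[OF sym aU that, of "{}" "{}"]
      swap_symmetric_qubit_marginal[OF sym aU that, of "{}" "{a}"]
      swap_symmetric_qubit_marginal[OF sym aU that, of "{a}" "{}"]
      swap_symmetric_qubit_marginal[OF sym aU that, of "{a}" "{a}"]
      \<beta>' unfolding \<alpha>_def \<beta>_def \<gamma>_def by (simp_all add: swap_lbl_singleton swap_lbl_fixed)
  have "cnj \<beta> * \<beta> = \<gamma> * \<alpha>"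
    using product_marginal_singular[OF d _ a b A(2) eq] inv aU b(1) marg[OF b(1)] marg[OF aU] by simp
  then obtain c0 c1 where c: "c0 \<noteq> 0 \<or> c1 \<noteq> 0"
    and ker: "cnj c0 * c0 * \<alpha> + cnj c0 * c1 * cnj \<beta> + cnj c1 * c0 * \<beta> + cnj c1 * c1 * \<gamma> = 0"
    using qubit_kernel_vector[OF \<alpha>] by blast
  show ?thesis
  proof (rule pure_fullsep_of_common_qubit_kernel[OF d c])
    fix i assume i: "i \<in> ?U"
    have "qform (Pow {i}) (ptrace_on ?U r {i}) (\<lambda>x. c0 * ket {} x + c1 * ket {i} x)
      = cnj c0 * c0 * \<alpha> + cnj c0 * c1 * cnj \<beta> + cnj c1 * c0 * \<beta> + cnj c1 * c1 * \<gamma>"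
      by (subst qform_two_kets) (auto simp: marg[OF i])
    then show "qform (Pow {i}) (ptrace_on ?U r {i}) (\<lambda>x. c0 * ket {} x + c1 * ket {i} x) = 0"
      using ker by simp
  qed
qed

section \<open>Symmetric entangled states are genuinely entangled\<close>

lemma ptrace_on_proj_product:
  assumes fin: "finite U" and S: "S \<subseteq> U" and \<beta>: "unit_vec (U - S) \<beta>"
    and fac: "\<And>x. x \<subseteq> U \<Longrightarrow> \<psi> x = \<alpha> (x \<inter> S) * \<beta> (x - S)"
    and x: "x \<subseteq> S" and y: "y \<subseteq> S"
  shows "ptrace_on U (proj \<psi>) S x y = \<alpha> x * cnj (\<alpha> y)"
proof -
  have "proj \<psi> (x \<union> z) (y \<union> z) = \<alpha> x * cnj (\<alpha> y) * complex_of_real ((cmod (\<beta> z))\<^sup>2)"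
    if z: "z \<in> Pow (U - S)" for z
  proof -
    have "(x \<union> z) \<inter> S = x" "(x \<union> z) - S = z" "(y \<union> z) \<inter> S = y" "(y \<union> z) - S = z"
      "x \<union> z \<subseteq> U" "y \<union> z \<subseteq> U"
      using x y z S by auto
    then show ?thesis
      unfolding proj_def using fac by (simp add: algebra_simps flip: complex_norm_square)
  qed
  then have "ptrace_on U (proj \<psi>) S x y = (\<Sum>z\<in>Pow (U - S). \<alpha> x * cnj (\<alpha> y) * complex_of_real ((cmod (\<beta> z))\<^sup>2))"
    unfolding ptrace_on_def using x y by simp
  also have "\<dots> = \<alpha> x * cnj (\<alpha> y) * complex_of_real (\<Sum>z\<in>Pow (U - S). (cmod (\<beta> z))\<^sup>2)"
    by (simp only: sum_distrib_left of_real_sum)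
  also have "\<dots> = \<alpha> x * cnj (\<alpha> y)"
    using \<beta> unfolding unit_vec_def by simp
  finally show ?thesis .
qed

lemma proj_product_eq_marginal_product:
  assumes S: "S \<subseteq> qubits n" and un: "unit_vec (qubits n) \<psi>" and ps: "product_wrt n S \<psi>"
  shows "proj \<psi> = marginal_product n (proj \<psi>) S"
proof (intro ext)
  fix x y
  let ?U = "qubits n"
  obtain \<alpha> \<beta> where ab: "unit_vec S \<alpha>" "unit_vec (?U - S) \<beta>"
    and fac: "\<And>x. x \<subseteq> ?U \<Longrightarrow> \<psi> x = \<alpha> (x \<inter> S) * \<beta> (x - S)"
    using ps unfolding product_wrt_def by blast
  have fac': "\<psi> x = \<beta> (x \<inter> (?U - S)) * \<alpha> (x - (?U - S))" if "x \<subseteq> ?U" for x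
  proof -
    have "x \<inter> (?U - S) = x - S" "x - (?U - S) = x \<inter> S" using that by auto
    then show ?thesis using fac[OF that] by (simp add: mult.commute)
  qed
  have ua: "unit_vec (?U - (?U - S)) \<alpha>" using ab(1) S by (simp add: double_diff)
  show "proj \<psi> x y = marginal_product n (proj \<psi>) S x y"
  proof (cases "x \<subseteq> ?U \<and> y \<subseteq> ?U")
    case True
    have "marginal_product n (proj \<psi>) S x y
        = ptrace_on ?U (proj \<psi>) S (x \<inter> S) (y \<inter> S) * ptrace_on ?U (proj \<psi>) (?U - S) (x - S) (y - S)"
      using True by (simp add: marginal_product_def tensor_op_def)
    also have "\<dots> = \<alpha> (x \<inter> S) * cnj (\<alpha> (y \<inter> S)) * (\<beta> (x - S) * cnj (\<beta> (y - S)))"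
    proof -
      have "x \<inter> S \<subseteq> S" "y \<inter> S \<subseteq> S" "x - S \<subseteq> ?U - S" "y - S \<subseteq> ?U - S" using True by auto
      then show ?thesis
        using ptrace_on_proj_product[OF finite_qubits S ab(2) fac, of "x \<inter> S" "y \<inter> S"]
          ptrace_on_proj_product[OF finite_qubits _ ua fac', of "x - S" "y - S"] by simp
    qed
    also have "\<dots> = proj \<psi> x y"
      using True fac unfolding proj_def by (simp add: algebra_simps)
    finally show ?thesis by simp
  next
    case False
    then show ?thesis
      using un unfolding marginal_product_def tensor_op_def proj_def unit_vec_def is_vec_def by auto
  qed
qed

lemma symmetric_pure_bisep_imp_fullsep:
  assumes pb: "pure_bisep n \<psi>" and sym: "\<forall>a\<in>qubits n. \<forall>b\<in>qubits n. \<forall>x. \<psi> (swap_lbl a b x) = \<psi> x"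
  shows "pure_fullsep n \<psi>"
proof -
  let ?U = "qubits n"
  have un: "unit_vec ?U \<psi>" using pb unfolding pure_bisep_def by simp
  obtain S where S: "proper_bipart n S" "product_wrt n S \<psi>" using pb unfolding pure_bisep_def by blast
  have SU: "S \<noteq> {}" "S \<subseteq> ?U" "S \<noteq> ?U" using S(1) unfolding proper_bipart_def by auto
  have "\<forall>i\<in>?U. \<forall>j\<in>?U. swap_invariant (proj \<psi>) i j"
    unfolding swap_invariant_def proj_def using sym by simp
  then obtain \<Phi> where \<Phi>: "pure_fullsep n \<Phi>" "proj \<psi> = proj \<Phi>"
    using symmetric_product_pure_fullsep[OF density_proj[OF un] _ SU proj_product_eq_marginal_product[OF SU(2) un S(2)]]
    by blast
  have "unit_vec ?U \<Phi>" "factorizable ?U \<Phi>" using \<Phi>(1) pure_fullsep_iff_factorizable by blast+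
  have "\<exists>y0. y0 \<subseteq> ?U \<and> \<Phi> y0 \<noteq> 0"
  proof (rule ccontr)
    assume "\<not> ?thesis"
    then have "(\<Sum>x\<in>Pow ?U. (cmod (\<Phi> x))\<^sup>2) = 0" by simp
    then show False using \<open>unit_vec ?U \<Phi>\<close> unfolding unit_vec_def by simp
  qed
  then obtain y0 where y0: "y0 \<subseteq> ?U" "\<Phi> y0 \<noteq> 0" by blast
  have pe: "\<psi> x * cnj (\<psi> y0) = \<Phi> x * cnj (\<Phi> y0)" for x
    using \<Phi>(2) unfolding proj_def by metis
  then have "\<psi> y0 * cnj (\<psi> y0) \<noteq> 0" using y0(2) by simp
  then have "\<psi> x = (cnj (\<Phi> y0) / cnj (\<psi> y0)) * \<Phi> x" for x
    using pe[of x] by (simp add: field_simps)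
  then have "factorizable ?U \<psi>"
    by (intro factorizable_scaled[OF \<open>factorizable ?U \<Phi>\<close>])
  then show ?thesis using un pure_fullsep_iff_factorizable by blast
qed

lemma gram_vector_swap_invariant:
  assumes fin: "finite U" and herm: "hermitian r" and inv: "swap_invariant r a b" and ab: "a \<in> U" "b \<in> U"
    and f: "gram_on (Pow U) r J f" and j: "j \<in> J" and x: "x \<subseteq> U"
  shows "f j (swap_lbl a b x) = f j x"
proof -
  let ?P = "swap_lbl a b"
  have Px: "?P x \<subseteq> U" using x swap_lbl_subset_iff[OF ab] by blast
  define u where "u y = ket x y + (-1) * ket (?P x) y" for y
  have "r (?P x) (?P x) = r x (?P x)" "r (?P x) x = r x x" "r x (?P x) = r x x"
    using inv swap_invariant_right[OF herm inv] unfolding swap_invariant_def by blast+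
  then have "qform (Pow U) r u = 0"
    unfolding u_def qform_add_scaled using fin x Px by (simp add: sform_ket_ket)
  then have "(\<Sum>y\<in>Pow U. cnj (f j y) * u y) = 0"
    using gram_on_qform_zero[OF f _ j] by blast
  moreover have "(\<Sum>y\<in>Pow U. cnj (f j y) * u y) = cnj (f j x) - cnj (f j (?P x))"
    using fin x Px by (simp add: u_def ring_distribs sum_subtractf sum_mult_ket)
  ultimately show ?thesis by simp
qed

lemma gram_on_mixture:
  fixes k :: nat
  assumes "\<forall>i<k. p i \<ge> 0"
  shows "gram_on X (\<lambda>x y. \<Sum>i<k. complex_of_real (p i) * proj (\<psi> i) x y) {..<k}
    (\<lambda>i x. complex_of_real (sqrt (p i)) * \<psi> i x)"
proof -
  have "complex_of_real (p i) * proj (\<psi> i) x y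
      = complex_of_real (sqrt (p i)) * \<psi> i x * cnj (complex_of_real (sqrt (p i)) * \<psi> i y)"
    if "i < k" for i x y
  proof -
    have "complex_of_real (sqrt (p i)) * complex_of_real (sqrt (p i)) = complex_of_real (p i)"
      using assms that by (simp flip: of_real_mult)
    then show ?thesis unfolding proj_def by (simp add: algebra_simps)
  qed
  then show ?thesis unfolding gram_on_def by simp
qed

lemma symmetric_biseparable_imp_fully_separable:
  assumes d: "density n r" and inv: "\<forall>i\<in>qubits n. \<forall>j\<in>qubits n. swap_invariant r i j"
    and bisep: "biseparable n r"
  shows "fully_separable n r"
proof -
  let ?U = "qubits n"
  have herm: "hermitian r" using d unfolding density_iff by blast
  obtain k and p :: "nat \<Rightarrow> real" and \<psi> where
    pk: "\<forall>i<k. p i \<ge> 0 \<and> pure_bisep n (\<psi> i)" and total: "(\<Sum>i<k. p i) = 1"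
    and r: "r = (\<lambda>x y. \<Sum>i<k. complex_of_real (p i) * proj (\<psi> i) x y)"
    using bisep unfolding biseparable_def convex_pure_def by blast
  define f where "f i x = complex_of_real (sqrt (p i)) * \<psi> i x" for i x
  have f: "gram_on (Pow ?U) r {..<k} f"
    unfolding r f_def using pk by (intro gram_on_mixture) simp
  have sym: "\<psi> i (swap_lbl a b x) = \<psi> i x" if i: "i < k" "p i > 0" and ab: "a \<in> ?U" "b \<in> ?U" for i a b x
  proof (cases "x \<subseteq> ?U")
    case True
    have "f i (swap_lbl a b x) = f i x"
      using gram_vector_swap_invariant[OF finite_qubits herm _ ab f _ True] inv ab i by simp
    then show ?thesis using i unfolding f_def by simp
  next
    case False
    then have "\<not> swap_lbl a b x \<subseteq> ?U" using swap_lbl_subset_iff[OF ab] by blast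
    then show ?thesis using False pk i unfolding pure_bisep_def unit_vec_def is_vec_def by auto
  qed
  define \<psi>' where "\<psi>' i = (if p i > 0 then \<psi> i else ket {})" for i
  have "pure_fullsep n (\<psi>' i)" if "i < k" for i
  proof (cases "p i > 0")
    case True
    then show ?thesis
      unfolding \<psi>'_def using symmetric_pure_bisep_imp_fullsep[of n "\<psi> i"] pk that sym by simp
  next
    case False
    have "factorizable ?U (ket {})" by (rule factorizable_ket) simp
    then show ?thesis
      unfolding \<psi>'_def using False unit_vec_ket_empty pure_fullsep_iff_factorizable by simp
  qed
  moreover have "r = (\<lambda>x y. \<Sum>i<k. complex_of_real (p i) * proj (\<psi>' i) x y)"
    unfolding r \<psi>'_def using pk by (intro ext sum.cong refl) (auto simp: less_eq_real_def)
  ultimately show ?thesis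
    unfolding fully_separable_def convex_pure_def using pk total by blast
qed

lemma fully_separable_proj: "pure_fullsep n \<Phi> \<Longrightarrow> fully_separable n (proj \<Phi>)"
  unfolding fully_separable_def convex_pure_def
  by (rule exI[of _ 1], rule exI[of _ "\<lambda>_. 1"], rule exI[of _ "\<lambda>_. \<Phi>"]) auto

lemma symmetric_entangled_marginal_product_neq:
  assumes d: "density n r" and inv: "\<forall>i\<in>qubits n. \<forall>j\<in>qubits n. swap_invariant r i j"
    and ent: "entangled n r" and A: "A \<noteq> {}" "A \<subseteq> qubits n" "A \<noteq> qubits n"
  shows "marginal_product n r A \<noteq> r"
  using symmetric_product_pure_fullsep[OF d inv A] ent fully_separable_proj
  unfolding entangled_def by metis

lemma symmetric_entangled_imp_genuinely_entangled:
  assumes "density n r" "\<forall>i\<in>qubits n. \<forall>j\<in>qubits n. swap_invariant r i j" "entangled n r"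
  shows "genuinely_entangled n r"
  using symmetric_biseparable_imp_fully_separable[OF assms(1,2)] assms(3)
  unfolding genuinely_entangled_def entangled_def by blast

section \<open>Counting the marginals\<close>

lemma compat_chain_subset:
  assumes d: "density n \<rho>" and inv: "\<forall>i\<in>qubits n. \<forall>j\<in>qubits n. swap_invariant \<rho> i j"
    and K: "2 \<le> K" "K \<le> n" and c: "n - 1 \<le> c * (K - 1)" "1 \<le> c"
    and SS: "\<forall>S\<in>SS. S \<subseteq> qubits n \<and> card S \<le> K"
  shows "compat n \<rho> (chain_block n K ` {..<c}) \<subseteq> compat n \<rho> SS"
proof
  let ?U = "qubits n"
  fix s assume s: "s \<in> compat n \<rho> (chain_block n K ` {..<c})"
  have ds: "density n s" using s unfolding compat_def by simp
  then have hs: "hermitian s" and ps: "psd_on (Pow ?U) s" and os: "is_op ?U s"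
    unfolding density_iff by auto
  have eqs: "ptrace_on ?U s (chain_block n K t) = ptrace_on ?U \<rho> (chain_block n K t)" if "t < c" for t
    using s that unfolding compat_def ptrace_eq_ptrace_on by auto
  have block: "swap_invariant s i j"
    if "t < c" "i \<in> chain_block n K t" "j \<in> chain_block n K t" for t i j
    using swap_invariant_of_ptrace_eq[OF finite_qubits hs ps os chain_block_subset[OF K(2)] that(2,3) _ eqs[OF that(1)]]
      inv that(2,3) chain_block_subset[OF K(2)] by blast
  have "swap_invariant s i 1" if "i \<in> ?U" for i
    using chain_blocks_connect[OF K c, of "swap_invariant s"] swap_invariant_sym swap_invariant_trans block that
    by blast
  then have "\<forall>i\<in>?U. \<forall>j\<in>?U. swap_invariant s i j"
    using swap_invariant_sym swap_invariant_trans by blast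
  then have sym: "swap_symmetric ?U s" "swap_symmetric ?U \<rho>"
    using swap_symmetric_of_swap_invariant hs inv d unfolding density_iff by blast+
  have "ptrace_on ?U s T = ptrace_on ?U \<rho> T" if "T \<in> SS" for T
    using ptrace_on_eq_of_card_le[OF finite_qubits sym chain_block_subset[OF K(2)] eqs[of 0]] SS that c
    by (simp add: card_chain_block)
  then show "s \<in> compat n \<rho> SS" using ds unfolding compat_def ptrace_eq_ptrace_on by simp
qed

lemma small_family_separates:
  assumes SS: "\<forall>S\<in>SS. S \<subseteq> qubits n \<and> card S \<le> K" "1 \<le> K" and small: "card SS * (K - 1) + 1 < n"
  obtains A where "A \<noteq> {}" "A \<subseteq> qubits n" "A \<noteq> qubits n" "\<forall>S\<in>SS. S \<subseteq> A \<or> S \<inter> A = {}"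
proof -
  let ?F = "SS - {{}}"
  have fin: "finite SS" using SS(1) by (metis Pow_iff finite_Pow_iff finite_qubits finite_subset subsetI)
  have "(\<Sum>S\<in>?F. card S - 1) \<le> (\<Sum>S\<in>?F. K - 1)"
    using SS(1) by (intro sum_mono) (simp add: diff_le_mono)
  also have "\<dots> \<le> (\<Sum>S\<in>SS. K - 1)"
    using fin by (intro sum_mono2) auto
  finally have "(\<Sum>S\<in>?F. card S - 1) + 1 < card (qubits n)" using small by simp
  then obtain A where A: "A \<noteq> {}" "A \<subseteq> qubits n" "A \<noteq> qubits n" "\<forall>S\<in>?F. S \<subseteq> A \<or> S \<inter> A = {}"
    using separating_set_exists[of "qubits n" ?F] fin SS(1) by auto
  then show ?thesis using that by blast
qed

lemma compat_eq_singleton: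
  assumes d: "density n r"
  shows "compat n r {qubits n} = {r}"
proof -
  have "s = r" if "density n s" "ptrace n s (qubits n) = ptrace n r (qubits n)" for s
  proof (intro ext)
    fix x y
    show "s x y = r x y"
    proof (cases "x \<subseteq> qubits n \<and> y \<subseteq> qubits n")
      case True
      then show ?thesis using fun_cong[OF fun_cong[OF that(2), of x], of y] by (simp add: ptrace_def)
    next
      case False
      then show ?thesis using d that(1) unfolding density_iff is_op_def by metis
    qed
  qed
  then show ?thesis using d unfolding compat_def by auto
qed

text \<open>Both counting statements of the theorem are instances of this lemma, with G the property
  "determines \<rho>" resp. "detects the genuine entanglement of \<rho>".\<close>

lemma optimal_marginal_families:
  fixes G :: "nat set set \<Rightarrow> bool"
  assumes n: "n \<ge> 2" and d: "density n \<rho>" and inv: "\<forall>i\<in>qubits n. \<forall>j\<in>qubits n. swap_invariant \<rho> i j"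
    and G_Pow: "\<And>SS. G SS \<Longrightarrow> SS \<subseteq> Pow (qubits n)"
    and G_mono: "\<And>SS SS0. G SS0 \<Longrightarrow> SS \<subseteq> Pow (qubits n) \<Longrightarrow> compat n \<rho> SS \<subseteq> compat n \<rho> SS0 \<Longrightarrow> G SS"
    and G_split: "\<And>SS A. SS \<subseteq> Pow (qubits n) \<Longrightarrow> A \<noteq> {} \<Longrightarrow> A \<subseteq> qubits n \<Longrightarrow> A \<noteq> qubits n
      \<Longrightarrow> \<forall>S\<in>SS. S \<subseteq> A \<or> S \<inter> A = {} \<Longrightarrow> \<not> G SS"
    and G_full: "G {qubits n}"
  defines "K \<equiv> LEAST k. \<exists>SS. G SS \<and> (\<forall>S\<in>SS. card S \<le> k)"
  shows "K \<ge> 2 \<and> (LEAST c. \<exists>SS. SS \<subseteq> subsets_k n K \<and> G SS \<and> card SS = c) = nat \<lceil>real (n - 1) / real (K - 1)\<rceil>"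
proof -
  let ?U = "qubits n"
  have full: "\<exists>SS. G SS \<and> (\<forall>S\<in>SS. card S \<le> n)" using G_full by auto
  have "\<exists>SS. G SS \<and> (\<forall>S\<in>SS. card S \<le> K)"
    unfolding K_def by (rule LeastI_ex) (use full in blast)
  then obtain SS0 where SS0: "G SS0" "\<forall>S\<in>SS0. card S \<le> K" by blast
  have Kn: "K \<le> n" unfolding K_def using full by (rule Least_le)
  have SS0_sets: "\<forall>S\<in>SS0. S \<subseteq> ?U \<and> card S \<le> K" using SS0 G_Pow by blast
  have connected: "n \<le> card SS * (k - 1) + 1"
    if GSS: "G SS" and card: "\<forall>S\<in>SS. card S \<le> k" and k: "1 \<le> k" for SS k
  proof (rule ccontr)
    assume "\<not> n \<le> card SS * (k - 1) + 1"
    moreover have "\<forall>S\<in>SS. S \<subseteq> ?U \<and> card S \<le> k" using GSS card G_Pow by blast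
    ultimately obtain A where "A \<noteq> {}" "A \<subseteq> ?U" "A \<noteq> ?U" "\<forall>S\<in>SS. S \<subseteq> A \<or> S \<inter> A = {}"
      using small_family_separates[OF _ k] by (metis not_le)
    then show False using G_split[OF G_Pow[OF GSS]] GSS by blast
  qed
  have K2: "K \<ge> 2"
    using connected[OF SS0(1), of 1] SS0(2) n by fastforce
  define c0 where "c0 = nat \<lceil>real (n - 1) / real (K - 1)\<rceil>"
  have c0: "n - 1 \<le> c0 * (K - 1)" "1 \<le> c0" "\<And>c. n - 1 \<le> c * (K - 1) \<Longrightarrow> c0 \<le> c"
    unfolding c0_def using nat_ceiling_divide[of "n - 1" "K - 1"] n K2 by auto
  have lower: "c0 \<le> card SS" if "SS \<subseteq> subsets_k n K" "G SS" for SS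
    using connected[OF that(2), of K] that(1) K2 c0(3)[of "card SS"] unfolding subsets_k_def by fastforce
  define F where "F = chain_block n K ` {..<c0}"
  have F: "F \<subseteq> subsets_k n K"
    unfolding F_def subsets_k_def using chain_block_subset[OF Kn] card_chain_block by blast
  have GF: "G F"
  proof (rule G_mono[OF SS0(1)])
    show "F \<subseteq> Pow ?U" using F unfolding subsets_k_def by blast
    show "compat n \<rho> F \<subseteq> compat n \<rho> SS0"
      unfolding F_def by (rule compat_chain_subset[OF d inv K2 Kn c0(1,2) SS0_sets])
  qed
  have cardF: "card F = c0"
    using lower[OF F GF] card_image_le[of "{..<c0}" "chain_block n K"] unfolding F_def by simp
  have "(LEAST c. \<exists>SS. SS \<subseteq> subsets_k n K \<and> G SS \<and> card SS = c) = c0"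
  proof (rule Least_equality)
    show "\<exists>SS. SS \<subseteq> subsets_k n K \<and> G SS \<and> card SS = c0" using F GF cardF by blast
    show "c0 \<le> c" if "\<exists>SS. SS \<subseteq> subsets_k n K \<and> G SS \<and> card SS = c" for c
      using that lower by blast
  qed
  then show ?thesis using K2 unfolding c0_def by simp
qed

lemma determines_subset_Pow: "determines n SS \<rho> \<Longrightarrow> SS \<subseteq> Pow (qubits n)"
  unfolding determines_def by blast

lemma determines_of_compat_subset:
  assumes "density n \<rho>" "determines n SS0 \<rho>" "SS \<subseteq> Pow (qubits n)" "compat n \<rho> SS \<subseteq> compat n \<rho> SS0"
  shows "determines n SS \<rho>"
  using assms unfolding determines_def compat_def by auto

lemma determines_qubits: "density n \<rho> \<Longrightarrow> determines n {qubits n} \<rho>"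
  unfolding determines_def using compat_eq_singleton by auto

lemma separated_family_not_determines:
  assumes "density n \<rho>" "\<forall>i\<in>qubits n. \<forall>j\<in>qubits n. swap_invariant \<rho> i j" "entangled n \<rho>"
    and "SS \<subseteq> Pow (qubits n)" "A \<noteq> {}" "A \<subseteq> qubits n" "A \<noteq> qubits n" "\<forall>S\<in>SS. S \<subseteq> A \<or> S \<inter> A = {}"
  shows "\<not> determines n SS \<rho>"
  using marginal_product_in_compat[OF assms(1,4,6,8)] symmetric_entangled_marginal_product_neq[OF assms(1-3,5-7)]
  unfolding determines_def by blast

lemma detects_GME_subset_Pow: "detects_GME n SS \<rho> \<Longrightarrow> SS \<subseteq> Pow (qubits n)"
  unfolding detects_GME_def by blast

lemma detects_GME_of_compat_subset:
  "detects_GME n SS0 \<rho> \<Longrightarrow> SS \<subseteq> Pow (qubits n) \<Longrightarrow> compat n \<rho> SS \<subseteq> compat n \<rho> SS0 \<Longrightarrow> detects_GME n SS \<rho>"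
  unfolding detects_GME_def by blast

lemma detects_GME_qubits: "density n \<rho> \<Longrightarrow> genuinely_entangled n \<rho> \<Longrightarrow> detects_GME n {qubits n} \<rho>"
  unfolding detects_GME_def using compat_eq_singleton by auto

lemma separated_family_not_detects_GME:
  assumes "density n \<rho>"
    and "SS \<subseteq> Pow (qubits n)" "A \<noteq> {}" "A \<subseteq> qubits n" "A \<noteq> qubits n" "\<forall>S\<in>SS. S \<subseteq> A \<or> S \<inter> A = {}"
  shows "\<not> detects_GME n SS \<rho>"
  using marginal_product_in_compat[OF assms(1,2,4,6)] biseparable_marginal_product[OF assms(1,3-5)]
  unfolding detects_GME_def genuinely_entangled_def by blast

theorem mainTheorem4:
  fixes n :: nat and \<rho> :: "nat set \<Rightarrow> nat set \<Rightarrow> complex"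
  assumes "n \<ge> 2" and "density n \<rho>" and "symmetric_state n \<rho>" and "entangled n \<rho>"
  shows "L_num n \<rho> \<ge> 2 \<and> l_num n \<rho> \<ge> 2
    \<and> M_num n \<rho> = nat \<lceil>real (n - 1) / real (L_num n \<rho> - 1)\<rceil>
    \<and> m_num n \<rho> = nat \<lceil>real (n - 1) / real (l_num n \<rho> - 1)\<rceil>"
proof -
  have inv: "\<forall>i\<in>qubits n. \<forall>j\<in>qubits n. swap_invariant \<rho> i j"
    using symmetric_state_swap_invariant[OF assms(2,3)] by blast
  have gme: "genuinely_entangled n \<rho>"
    using symmetric_entangled_imp_genuinely_entangled[OF assms(2) inv assms(4)] .
  have "L_num n \<rho> \<ge> 2 \<and> M_num n \<rho> = nat \<lceil>real (n - 1) / real (L_num n \<rho> - 1)\<rceil>"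
    unfolding L_num_def M_num_def
    by (rule optimal_marginal_families[where G = "\<lambda>SS. determines n SS \<rho>", OF assms(1,2) inv determines_subset_Pow
          determines_of_compat_subset[OF assms(2)] separated_family_not_determines[OF assms(2) inv assms(4)]
          determines_qubits[OF assms(2)]])
  moreover have "l_num n \<rho> \<ge> 2 \<and> m_num n \<rho> = nat \<lceil>real (n - 1) / real (l_num n \<rho> - 1)\<rceil>"
    unfolding l_num_def m_num_def
    by (rule optimal_marginal_families[where G = "\<lambda>SS. detects_GME n SS \<rho>", OF assms(1,2) inv detects_GME_subset_Pow
          detects_GME_of_compat_subset separated_family_not_detects_GME[OF assms(2)]
          detects_GME_qubits[OF assms(2) gme]])
  ultimately show ?thesis by blast
qed

end
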